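(* Let $d\ge3$. There is a constant $\kappa>1$ (independent of $r$, $\rho$ and $\Lambda$) such that the following holds. Let $\rho\in(0,1)$, $r\ge1$ an integer, and let $\Lambda\subseteq\mathbb{Z}^d$ satisfy $$|\Lambda\cap Q(x,r)|\le\rho\,|Q(x,r)|\quad\text{for all }x\in2r\mathbb{Z}^d.$$ Then for any $n\ge\rho^{\frac2d-1}r^2$ and any $t\ge\kappa\rho n$, $$\mathbb{P}\big[|\mathcal{R}_n\cap\Lambda|\ge t\big]\le\exp\Big(-\rho^{1-\frac2d}\,\frac{t}{2r^2}\Big).$$
   Context: $(S_m)_{m\ge0}$ is the simple random walk on $\mathbb{Z}^d$ started at the origin, with law $\mathbb{P}$; $\mathcal{R}_n:=\{S_0,\dots,S_n\}$ is its range up to time $n$, and $|\cdot|$ denotes cardinality. For $x\in\mathbb{Z}^d$ and $r\ge1$, $Q(x,r):=(x+[-r,r)^d)\cap\mathbb{Z}^d$. *)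

theory Defs
  imports "HOL-Analysis.Analysis" "HOL-Probability.Probability"
begin

text \<open>Points of Z^d are vectors int ^ d; the dimension is d = CARD('d).\<close>

definition srw_steps :: "(int ^ 'd) set" where
  "srw_steps = {axis i 1 | i. True} \<union> {axis i (-1) | i. True}"

definition srw_increments :: "nat \<Rightarrow> (nat \<Rightarrow> int ^ 'd) pmf" where
  "srw_increments n = Pi_pmf {..<n} 0 (\<lambda>_. pmf_of_set srw_steps)"

definition srw_pos :: "(nat \<Rightarrow> int ^ 'd) \<Rightarrow> nat \<Rightarrow> int ^ 'd" where
  "srw_pos X m = (\<Sum>k<m. X k)"

definition srw_range :: "(nat \<Rightarrow> int ^ 'd) \<Rightarrow> nat \<Rightarrow> (int ^ 'd) set" where
  "srw_range X n = srw_pos X ` {..n}"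

definition box_Q :: "int ^ 'd \<Rightarrow> int \<Rightarrow> (int ^ 'd) set" where
  "box_Q x r = {y. \<forall>i. x $ i - r \<le> y $ i \<and> y $ i < x $ i + r}"

end

(*
  Write C = visits_const d.  The expected number of visits to Lambda during m steps,
  from any starting point, is at most C (rho m + rho^(2/d) r^2).  Indeed, a step of the
  d-dimensional walk moves a uniformly chosen coordinate, so after j steps the coordinates are
  independent one-dimensional walks with random step numbers N_i.  Grouping the points of Lambda
  by the grid boxes of side 2r, the density hypothesis bounds the hitting probability by
  rho (2r)^d times a product of sums of one-dimensional block maxima, and the local bound
  P(S_k = z) <= 1/sqrt(k+1) makes the resulting series summable because d >= 3.
  Khas'minskii's lemma turns this linear bound into a bound on the exponential moment
  E exp(theta #visits) over time blocks on which theta times the expected number of visits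
  is small, and the Markov property multiplies these bounds over consecutive blocks.
  The choice theta = rho^(1-2/d) / r^2 and a Chernoff bound give the tail estimate; if
  8 C rho > 1, the threshold t exceeds the size of the range and the probability vanishes.
*)

theory Submission
  imports Defs
begin

section \<open>The one-dimensional walk\<close>

fun srw1_prob :: "nat \<Rightarrow> int \<Rightarrow> real" where
  "srw1_prob 0 z = (if z = 0 then 1 else 0)"
| "srw1_prob (Suc k) z = (srw1_prob k (z - 1) + srw1_prob k (z + 1)) / 2"

lemma srw1_prob_nonneg: "srw1_prob k z \<ge> 0"
  by (induction k arbitrary: z) auto

lemma srw1_prob_eq_0_if_abs_gt: "int k < \<bar>z\<bar> \<Longrightarrow> srw1_prob k z = 0"
  by (induction k arbitrary: z) auto

lemma srw1_prob_eq_0_if_odd: "odd (int k + z) \<Longrightarrow> srw1_prob k z = 0"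
proof (induction k arbitrary: z)
  case (Suc k)
  then have "odd (int k + (z - 1))" "odd (int k + (z + 1))" by auto
  with Suc.IH show ?case by simp
qed auto

lemma srw1_prob_minus: "srw1_prob k (- z) = srw1_prob k z"
proof (induction k arbitrary: z)
  case (Suc k)
  have "- z - 1 = - (z + 1)" and "- z + 1 = - (z - 1)"
    by simp_all
  then show ?case
    by (simp only: srw1_prob.simps Suc.IH add.commute)
qed auto

lemma srw1_prob_antimono:
  "0 \<le> a \<Longrightarrow> a \<le> b \<Longrightarrow> even (b - a) \<Longrightarrow> srw1_prob k b \<le> srw1_prob k a"
proof (induction k arbitrary: a b)
  case (Suc k)
  have "1 \<le> a \<or> a = 0 \<and> b = 0 \<or> a = 0 \<and> 2 \<le> b"
    using Suc.prems by presburger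
  then consider "1 \<le> a" | "a = 0" "b = 0" | "a = 0" "2 \<le> b"
    by blast
  then show ?case
  proof cases
    case 1
    with Suc.prems Suc.IH[of "a - 1" "b - 1"] Suc.IH[of "a + 1" "b + 1"] show ?thesis
      by simp
  next
    case 3
    with Suc.prems Suc.IH[of 1 "b - 1"] Suc.IH[of 1 "b + 1"] srw1_prob_minus[of k 1] show ?thesis
      by simp
  qed simp
qed auto

lemma srw1_prob_abs: "srw1_prob k \<bar>z\<bar> = srw1_prob k z"
  by (simp add: abs_if srw1_prob_minus)

lemma srw1_prob_abs_antimono:
  assumes "\<bar>a\<bar> \<le> \<bar>b\<bar>" and "even (a + b)"
  shows "srw1_prob k b \<le> srw1_prob k a"
proof -
  have "even (\<bar>b\<bar> - \<bar>a\<bar>)"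
    using assms(2) by (auto simp: abs_if)
  then have "srw1_prob k \<bar>b\<bar> \<le> srw1_prob k \<bar>a\<bar>"
    using assms(1) by (intro srw1_prob_antimono) auto
  then show ?thesis
    by (simp only: srw1_prob_abs)
qed

lemma srw1_prob_binomial: "srw1_prob k (2 * int a - int k) = real (k choose a) / 2 ^ k"
proof (induction k arbitrary: a)
  case 0
  then show ?case by (cases a) auto
next
  case (Suc k)
  show ?case
  proof (cases a)
    case 0
    with Suc.IH[of 0] show ?thesis
      by (simp add: srw1_prob_eq_0_if_abs_gt algebra_simps)
  next
    case (Suc a')
    have "2 * int a - int (Suc k) - 1 = 2 * int a' - int k"
      and "2 * int a - int (Suc k) + 1 = 2 * int (Suc a') - int k"
      using Suc by simp_all
    then have "srw1_prob (Suc k) (2 * int a - int (Suc k))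
        = (srw1_prob k (2 * int a' - int k) + srw1_prob k (2 * int (Suc a') - int k)) / 2"
      by (simp only: srw1_prob.simps)
    with Suc Suc.IH[of a'] Suc.IH[of "Suc a'"] show ?thesis
      by (simp add: add_divide_distrib)
  qed
qed

lemma srw1_prob_support:
  assumes "srw1_prob k z \<noteq> 0"
  obtains a where "a \<le> k" and "z = 2 * int a - int k"
proof -
  have "\<bar>z\<bar> \<le> int k" and "even (int k + z)"
    using assms srw1_prob_eq_0_if_abs_gt[of k z] srw1_prob_eq_0_if_odd[of k z] by linarith+
  moreover from \<open>even (int k + z)\<close> obtain m where "int k + z = 2 * m"
    by (rule evenE)
  ultimately show ?thesis
    by (intro that[of "nat m"]) auto
qed

lemma central_binomial_Suc:
  "real ((2 * Suc n) choose Suc n) = 2 * (2 * real n + 1) * real ((2 * n) choose n) / (real n + 1)"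
proof -
  define X Y Z where "X = Suc (Suc (2 * n)) choose Suc n"
    and "Y = Suc (2 * n) choose n" and "Z = (2 * n) choose n"
  have X: "Suc n * X = Suc (Suc (2 * n)) * Y"
    unfolding X_def Y_def by (rule Suc_times_binomial)
  have Y: "Suc n * Y = Suc (2 * n) * Z"
    using Suc_times_binomial[of n "2 * n"] central_binomial_odd[of "Suc (2 * n)"]
    unfolding Y_def Z_def by (simp del: binomial_Suc_Suc)
  have "real (Suc n) * real X = real (Suc n) * (2 * real Y)"
    and "real (Suc n) * real Y = real (Suc (2 * n)) * real Z"
    by (simp_all only: of_nat_mult[symmetric] X Y) (simp add: algebra_simps)
  then have XY: "real X = 2 * real Y" and YZ: "real Y = (2 * real n + 1) * real Z / (real n + 1)"
    by (simp_all del: of_nat_Suc) (simp add: field_simps)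
  then have X': "real X = 2 * (2 * real n + 1) * real Z / (real n + 1)"
    by simp
  have "(2 * Suc n) choose Suc n = X"
    unfolding X_def by (simp only: mult_2 add_Suc_right add_Suc)
  then show ?thesis
    unfolding Z_def[symmetric] by (simp only: X')
qed

lemma central_binomial_sq_le: "(real ((2 * n) choose n) / 4 ^ n)\<^sup>2 * (2 * real n + 1) \<le> 1"
proof (induction n)
  case (Suc n)
  define b where "b = real ((2 * n) choose n) / 4 ^ n"
  have "(b * ((2 * real n + 1) / (2 * real n + 2)))\<^sup>2 * (2 * real n + 3)
      = b\<^sup>2 * (2 * real n + 1) * ((2 * real n + 1) * (2 * real n + 3) / (2 * real n + 2)\<^sup>2)"
    by (simp add: power2_eq_square field_simps)
  also have "\<dots> \<le> 1 * 1"
  proof (intro mult_mono)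
    show "b\<^sup>2 * (2 * real n + 1) \<le> 1"
      using Suc.IH by (simp add: b_def)
    show "(2 * real n + 1) * (2 * real n + 3) / (2 * real n + 2)\<^sup>2 \<le> 1"
      by (subst divide_le_eq_1_pos) (simp_all add: power2_eq_square algebra_simps add_pos_nonneg)
  qed simp_all
  finally have "(b * ((2 * real n + 1) / (2 * real n + 2)))\<^sup>2 * (2 * real n + 3) \<le> 1"
    by simp
  moreover have "real ((2 * Suc n) choose Suc n) / 4 ^ Suc n = b * ((2 * real n + 1) / (2 * real n + 2))"
    unfolding central_binomial_Suc b_def by (simp add: divide_simps) (simp add: algebra_simps)
  ultimately show ?case
    by (simp add: add.commute)
qed simp

lemma central_binomial_le: "real ((2 * n) choose n) / 4 ^ n \<le> 1 / sqrt (2 * real n + 1)"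
proof -
  have "(real ((2 * n) choose n) / 4 ^ n)\<^sup>2 \<le> (1 / sqrt (2 * real n + 1))\<^sup>2"
    using central_binomial_sq_le[of n] by (simp add: power_divide field_simps)
  then show ?thesis
    by (rule power2_le_imp_le) simp
qed

lemma srw1_prob_le: "srw1_prob k z \<le> 1 / sqrt (real k + 1)"
proof (cases "srw1_prob k z = 0")
  case False
  then obtain a where "a \<le> k" and z: "z = 2 * int a - int k"
    by (rule srw1_prob_support)
  have "srw1_prob k z \<le> real (k choose (k div 2)) / 2 ^ k"
    unfolding z srw1_prob_binomial by (intro divide_right_mono) (simp_all add: binomial_maximum)
  also have "\<dots> \<le> 1 / sqrt (real k + 1)"
  proof (cases "even k")
    case True
    then obtain n where "k = 2 * n" by blast
    with central_binomial_le[of n] show ?thesis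
      by (simp add: power_mult)
  next
    case False
    then obtain n where k: "k = 2 * n + 1" using oddE by blast
    have "(2 * Suc n) choose Suc n = 2 * (k choose (k div 2))"
      using central_binomial_odd[of k] k by simp
    then have "real (k choose (k div 2)) / 2 ^ k = real ((2 * Suc n) choose Suc n) / 4 ^ Suc n"
      by (simp add: k power_mult power_add)
    also have "\<dots> \<le> 1 / sqrt (2 * real (Suc n) + 1)"
      by (rule central_binomial_le)
    also have "\<dots> \<le> 1 / sqrt (real k + 1)"
      using k by (intro divide_left_mono real_sqrt_le_mono) auto
    finally show ?thesis .
  qed
  finally show ?thesis .
qed simp

lemma srw1_prob_sum_le: "finite W \<Longrightarrow> (\<Sum>w\<in>W. srw1_prob k (w - x)) \<le> 1"
proof (induction k arbitrary: x)
  case 0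
  have "(\<Sum>w\<in>W. srw1_prob 0 (w - x)) = (\<Sum>w\<in>W \<inter> {x}. 1)"
    using 0 by (simp add: sum.inter_restrict[symmetric] indicator_def)
  also have "\<dots> \<le> 1"
    by (simp add: card_le_Suc0_iff_eq)
  finally show ?case .
next
  case (Suc k)
  have "(\<Sum>w\<in>W. srw1_prob (Suc k) (w - x))
      = (\<Sum>w\<in>W. (srw1_prob k (w - (x + 1)) + srw1_prob k (w - (x - 1))) / 2)"
    by (rule sum.cong) (simp_all add: algebra_simps)
  also have "\<dots> = ((\<Sum>w\<in>W. srw1_prob k (w - (x + 1))) + (\<Sum>w\<in>W. srw1_prob k (w - (x - 1)))) / 2"
    by (simp only: sum_divide_distrib[symmetric] sum.distrib)
  also have "\<dots> \<le> (1 + 1) / 2"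
    using Suc by (intro divide_right_mono add_mono) auto
  finally show ?case by simp
qed

section \<open>Blocks of a grid of mesh \<open>2r\<close>\<close>

lemma int_div_eq_iff:
  fixes a b q :: int
  assumes "0 < b"
  shows "a div b = q \<longleftrightarrow> b * q \<le> a \<and> a < b * q + b"
proof -
  have "a div b = (a - b * q) div b + q"
    using div_mult_self1[of b a "- q"] assms by (simp add: algebra_simps)
  then show ?thesis
    using assms by (auto simp: zdiv_eq_0_iff)
qed

definition block :: "nat \<Rightarrow> int \<Rightarrow> int set" where
  "block r c = {2 * int r * c - int r ..< 2 * int r * c + int r}"

lemma finite_block [simp]: "finite (block r c)"
  by (simp add: block_def)

lemma center_in_block: "0 < r \<Longrightarrow> 2 * int r * c \<in> block r c"
  by (simp add: block_def)

lemma mem_block_iff: "0 < r \<Longrightarrow> w \<in> block r c \<longleftrightarrow> (w + int r) div (2 * int r) = c"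
  by (subst int_div_eq_iff) (auto simp: block_def)

definition block_max :: "(int \<Rightarrow> real) \<Rightarrow> nat \<Rightarrow> int \<Rightarrow> real" where
  "block_max f r c = Max (f ` block r c)"

lemma block_max_ge: "w \<in> block r c \<Longrightarrow> f w \<le> block_max f r c"
  unfolding block_max_def by (rule Max_ge) simp_all

lemma block_max_attained:
  assumes "0 < r"
  obtains w where "w \<in> block r c" and "block_max f r c = f w"
proof -
  have "block_max f r c \<in> f ` block r c"
    unfolding block_max_def using center_in_block[OF assms] by (intro Max_in) auto
  with that show ?thesis by blast
qed

lemma block_max_nonneg: "0 < r \<Longrightarrow> (\<And>w. 0 \<le> f w) \<Longrightarrow> 0 \<le> block_max f r c"
  by (metis block_max_attained)

lemma srw1_block_max_le_sum_block:
  assumes "0 < r"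
    and closer: "\<And>e w. e \<in> block r c' \<Longrightarrow> w \<in> block r c \<Longrightarrow> \<bar>e - x\<bar> \<le> \<bar>w - x\<bar>"
  shows "real r * block_max (\<lambda>w. srw1_prob k (w - x)) r c \<le> (\<Sum>e\<in>block r c'. srw1_prob k (e - x))"
proof -
  obtain w where w: "w \<in> block r c" and max: "block_max (\<lambda>w. srw1_prob k (w - x)) r c = srw1_prob k (w - x)"
    using block_max_attained[OF assms(1)] .
  define s where "s = 2 * int r * c' - int r"
  define p where "p = (w - s) mod 2"
  \<comment> \<open>the \<open>r\<close> points of \<open>block r c'\<close> having the parity of \<open>w\<close>\<close>
  define E where "E = (\<lambda>j. s + 2 * int j + p) ` {..<r}"
  have p: "0 \<le> p" "p \<le> 1" "even (w - s - p)"
    unfolding p_def by (simp_all add: minus_mod_eq_mult_div)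
  have card_E: "card E = r"
    unfolding E_def by (subst card_image) (auto simp: inj_on_def)
  have E_block: "E \<subseteq> block r c'"
    using p by (auto simp: E_def block_def s_def)
  have "srw1_prob k (w - x) \<le> srw1_prob k (e - x)" if e: "e \<in> E" for e
  proof (rule srw1_prob_abs_antimono)
    show "\<bar>e - x\<bar> \<le> \<bar>w - x\<bar>"
      using closer w E_block e by blast
    obtain j where "e = s + 2 * int j + p"
      using e by (auto simp: E_def)
    with p(3) show "even (e - x + (w - x))"
      by (metis (no_types, lifting) dvd_add_left_iff dvd_triv_left even_add diff_diff_add
          add.commute diff_add_cancel mult_2 add_diff_cancel_left')
  qed
  then have "real r * srw1_prob k (w - x) \<le> (\<Sum>e\<in>E. srw1_prob k (e - x))"
    using sum_mono[of E "\<lambda>_. srw1_prob k (w - x)"] card_E by simp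
  also have "\<dots> \<le> (\<Sum>e\<in>block r c'. srw1_prob k (e - x))"
    using E_block by (intro sum_mono2) (simp_all add: srw1_prob_nonneg)
  finally show ?thesis
    by (simp only: max)
qed

lemma srw1_sum_block_max_shifted_le:
  assumes "0 < r" and "finite C" and "inj_on g C"
    and closer: "\<And>c e w. c \<in> C \<Longrightarrow> e \<in> block r (g c) \<Longrightarrow> w \<in> block r c \<Longrightarrow> \<bar>e - x\<bar> \<le> \<bar>w - x\<bar>"
  shows "(\<Sum>c\<in>C. block_max (\<lambda>w. srw1_prob k (w - x)) r c) \<le> 1 / real r"
proof -
  have "(\<Sum>c\<in>C. block_max (\<lambda>w. srw1_prob k (w - x)) r c)
      \<le> (\<Sum>c\<in>C. (\<Sum>e\<in>block r (g c). srw1_prob k (e - x)) / real r)"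
    using srw1_block_max_le_sum_block[OF assms(1) closer] assms(1)
    by (intro sum_mono) (simp add: field_simps)
  also have "\<dots> = (\<Sum>e\<in>(\<Union>c\<in>C. block r (g c)). srw1_prob k (e - x)) / real r"
    using assms(1-3)
    by (subst sum.UNION_disjoint) (auto simp: sum_divide_distrib inj_on_def mem_block_iff)
  also have "\<dots> \<le> 1 / real r"
    using assms(2) by (intro divide_right_mono srw1_prob_sum_le) auto
  finally show ?thesis .
qed

lemma blocks_near_subset:
  fixes x :: int
  assumes "0 < r"
  defines "c\<^sub>0 \<equiv> (x - 3 * int r) div (2 * int r)"
  shows "{c. 2 * int r * c - 3 * int r < x \<and> x < 2 * int r * c + 3 * int r} \<subseteq> {c\<^sub>0 + 1 .. c\<^sub>0 + 3}"
proof
  fix c assume "c \<in> {c. 2 * int r * c - 3 * int r < x \<and> x < 2 * int r * c + 3 * int r}"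
  then have "2 * int r * c - 3 * int r < x" and "x < 2 * int r * c + 3 * int r"
    by simp_all
  moreover have "2 * int r * c\<^sub>0 \<le> x - 3 * int r" "x - 3 * int r < 2 * int r * c\<^sub>0 + 2 * int r"
    using int_div_eq_iff[of "2 * int r" "x - 3 * int r" c\<^sub>0] assms by auto
  ultimately have "2 * int r * c\<^sub>0 < 2 * int r * c" and "2 * int r * c < 2 * int r * (c\<^sub>0 + 4)"
    unfolding distrib_left by linarith+
  then show "c \<in> {c\<^sub>0 + 1 .. c\<^sub>0 + 3}"
    using assms(1) by (simp add: mult_less_cancel_left_pos)
qed

lemma srw1_sum_block_max_near_le:
  assumes "0 < r" and "finite C"
    and near: "C \<subseteq> {c. 2 * int r * c - 3 * int r < x \<and> x < 2 * int r * c + 3 * int r}"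
  shows "(\<Sum>c\<in>C. block_max (\<lambda>w. srw1_prob k (w - x)) r c) \<le> 3 / sqrt (real k + 1)"
proof -
  let ?c\<^sub>0 = "(x - 3 * int r) div (2 * int r)"
  have "card C \<le> card {?c\<^sub>0 + 1 .. ?c\<^sub>0 + 3}"
    using near blocks_near_subset[OF assms(1), of x] by (intro card_mono) auto
  then have "card C \<le> 3"
    by simp
  have "block_max (\<lambda>w. srw1_prob k (w - x)) r c \<le> 1 / sqrt (real k + 1)" for c
    using block_max_attained[OF assms(1), of c] srw1_prob_le by metis
  then have "(\<Sum>c\<in>C. block_max (\<lambda>w. srw1_prob k (w - x)) r c) \<le> real (card C) * (1 / sqrt (real k + 1))"
    by (intro sum_bounded_above)
  also have "\<dots> \<le> 3 * (1 / sqrt (real k + 1))"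
    using \<open>card C \<le> 3\<close> by (intro mult_right_mono) simp_all
  finally show ?thesis
    by simp
qed

text \<open>Blocks lying entirely on one side of \<open>x\<close> are dominated by their neighbour towards \<open>x\<close>,
  because \<open>srw1_prob k\<close> decreases away from \<open>0\<close> on each parity class; the at most three blocks
  near \<open>x\<close> are bounded by \<open>srw1_prob_le\<close>.\<close>

lemma srw1_sum_block_max_le:
  assumes "0 < r" and "finite C"
  shows "(\<Sum>c\<in>C. block_max (\<lambda>w. srw1_prob k (w - x)) r c) \<le> 3 / sqrt (real k + 1) + 2 / real r"
proof -
  let ?m = "block_max (\<lambda>w. srw1_prob k (w - x)) r"
  define C\<^sub>1 where "C\<^sub>1 = {c\<in>C. x \<le> 2 * int r * c - 3 * int r}"
  define C\<^sub>2 where "C\<^sub>2 = {c\<in>C. 2 * int r * c + 3 * int r \<le> x}"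
  define C\<^sub>3 where "C\<^sub>3 = C - C\<^sub>1 - C\<^sub>2"
  have "C = C\<^sub>1 \<union> C\<^sub>2 \<union> C\<^sub>3"
    using assms(1) by (auto simp: C\<^sub>1_def C\<^sub>2_def C\<^sub>3_def)
  moreover have "C\<^sub>1 \<inter> C\<^sub>2 = {}" "C\<^sub>1 \<inter> C\<^sub>3 = {}" "C\<^sub>2 \<inter> C\<^sub>3 = {}"
    using assms(1) by (auto simp: C\<^sub>1_def C\<^sub>2_def C\<^sub>3_def)
  moreover have "finite C\<^sub>1" "finite C\<^sub>2" "finite C\<^sub>3"
    using assms(2) by (simp_all add: C\<^sub>1_def C\<^sub>2_def C\<^sub>3_def)
  ultimately have "(\<Sum>c\<in>C. ?m c) = (\<Sum>c\<in>C\<^sub>1. ?m c) + (\<Sum>c\<in>C\<^sub>2. ?m c) + (\<Sum>c\<in>C\<^sub>3. ?m c)"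
    by (simp add: sum.union_disjoint Int_Un_distrib2)
  also have "(\<Sum>c\<in>C\<^sub>1. ?m c) \<le> 1 / real r"
  proof (rule srw1_sum_block_max_shifted_le[where g = "\<lambda>c. c - 1"])
    fix c e w assume "c \<in> C\<^sub>1" "e \<in> block r (c - 1)" "w \<in> block r c"
    then have "x \<le> e" "e \<le> w"
      by (auto simp: C\<^sub>1_def block_def right_diff_distrib)
    then show "\<bar>e - x\<bar> \<le> \<bar>w - x\<bar>" by arith
  qed (use assms in \<open>auto simp: C\<^sub>1_def inj_on_def\<close>)
  also have "(\<Sum>c\<in>C\<^sub>2. ?m c) \<le> 1 / real r"
  proof (rule srw1_sum_block_max_shifted_le[where g = "\<lambda>c. c + 1"])
    fix c e w assume "c \<in> C\<^sub>2" "e \<in> block r (c + 1)" "w \<in> block r c"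
    then have "w \<le> e" "e \<le> x"
      by (auto simp: C\<^sub>2_def block_def distrib_left)
    then show "\<bar>e - x\<bar> \<le> \<bar>w - x\<bar>" by arith
  qed (use assms in \<open>auto simp: C\<^sub>2_def inj_on_def\<close>)
  also have "(\<Sum>c\<in>C\<^sub>3. ?m c) \<le> 3 / sqrt (real k + 1)"
    using assms by (intro srw1_sum_block_max_near_le) (auto simp: C\<^sub>1_def C\<^sub>2_def C\<^sub>3_def)
  finally show ?thesis by simp
qed

section \<open>Product sets and cubes\<close>

definition vec_Pi :: "('d::finite \<Rightarrow> 'a set) \<Rightarrow> ('a ^ 'd) set" where
  "vec_Pi C = {v. \<forall>i. v $ i \<in> C i}"

lemma bij_betw_vec_nth_vec_Pi: "bij_betw vec_nth (vec_Pi C) (Pi\<^sub>E UNIV C)"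
proof (rule bij_betwI')
  fix f assume "f \<in> Pi\<^sub>E UNIV C"
  then show "\<exists>v\<in>vec_Pi C. f = vec_nth v"
    by (intro bexI[of _ "vec_lambda f"]) (auto simp: vec_Pi_def)
qed (auto simp: vec_Pi_def vec_eq_iff)

lemma finite_vec_Pi: "(\<And>i. finite (C i)) \<Longrightarrow> finite (vec_Pi C)"
  using bij_betw_finite[OF bij_betw_vec_nth_vec_Pi, of C] by (simp add: finite_PiE)

lemma card_vec_Pi: "card (vec_Pi C) = (\<Prod>i\<in>UNIV. card (C i))"
  using bij_betw_same_card[OF bij_betw_vec_nth_vec_Pi, of C] by (simp add: card_PiE)

lemma sum_prod_vec_Pi:
  fixes G :: "'d::finite \<Rightarrow> 'a \<Rightarrow> 'b::comm_semiring_1"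
  assumes "\<And>i. finite (C i)"
  shows "(\<Sum>v\<in>vec_Pi C. \<Prod>i\<in>UNIV. G i (v $ i)) = (\<Prod>i\<in>UNIV. \<Sum>c\<in>C i. G i c)"
proof -
  have "(\<Sum>v\<in>vec_Pi C. \<Prod>i\<in>UNIV. G i (v $ i)) = (\<Sum>f\<in>Pi\<^sub>E UNIV C. \<Prod>i\<in>UNIV. G i (f i))"
    by (rule sum.reindex_bij_betw[OF bij_betw_vec_nth_vec_Pi])
  also have "\<dots> = (\<Prod>i\<in>UNIV. \<Sum>c\<in>C i. G i c)"
    by (rule prod_sum_PiE[symmetric]) (simp_all add: assms)
  finally show ?thesis .
qed

lemma box_Q_eq_vec_Pi: "box_Q x r = vec_Pi (\<lambda>i. {x $ i - r ..< x $ i + r})"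
  by (auto simp: box_Q_def vec_Pi_def)

lemma finite_box_Q: "finite (box_Q x r)"
  unfolding box_Q_eq_vec_Pi by (rule finite_vec_Pi) simp

lemma card_box_Q: "real (card (box_Q (x :: int ^ 'd::finite) (int r))) = (2 * real r) ^ CARD('d)"
  unfolding box_Q_eq_vec_Pi card_vec_Pi by simp

definition cube :: "nat \<Rightarrow> (int ^ 'd::finite) set" where
  "cube L = vec_Pi (\<lambda>_. {- int L .. int L})"

lemma finite_cube [simp]: "finite (cube L)"
  unfolding cube_def by (rule finite_vec_Pi) simp

lemma mem_cube_iff: "z \<in> cube L \<longleftrightarrow> (\<forall>i. \<bar>z $ i\<bar> \<le> int L)"
proof -
  have "z $ i \<in> {- int L .. int L} \<longleftrightarrow> \<bar>z $ i\<bar> \<le> int L" for i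
    by (auto simp: abs_le_iff)
  then show ?thesis
    by (simp add: cube_def vec_Pi_def)
qed

lemma cube_mono: "L \<le> L' \<Longrightarrow> cube L \<subseteq> cube L'"
  by (auto simp: mem_cube_iff) (meson of_nat_le_iff order_trans)

lemma cube_0 [simp]: "cube 0 = {0}"
  by (auto simp: mem_cube_iff vec_eq_iff)

section \<open>The transition operator as a mixture of product kernels\<close>

definition srw_kernel :: "('d::finite \<Rightarrow> nat) \<Rightarrow> int ^ 'd \<Rightarrow> real" where
  "srw_kernel N z = (\<Prod>i\<in>UNIV. srw1_prob (N i) (z $ i))"

definition kernel_avg :: "('d::finite \<Rightarrow> nat) \<Rightarrow> (int ^ 'd \<Rightarrow> real) \<Rightarrow> int ^ 'd \<Rightarrow> real" where
  "kernel_avg N f x = (\<Sum>z\<in>cube (sum N UNIV). srw_kernel N z * f (x + z))"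

lemma srw_kernel_nonneg: "srw_kernel N z \<ge> 0"
  unfolding srw_kernel_def by (intro prod_nonneg) (simp add: srw1_prob_nonneg)

lemma srw_kernel_eq_0: "z \<notin> cube L \<Longrightarrow> sum N UNIV \<le> L \<Longrightarrow> srw_kernel N z = 0"
proof -
  assume "z \<notin> cube L" and L: "sum N UNIV \<le> L"
  then obtain i where "int L < \<bar>z $ i\<bar>"
    by (auto simp: mem_cube_iff not_le)
  moreover have "N i \<le> L"
    using member_le_sum[of i UNIV N] L by simp
  ultimately show ?thesis
    unfolding srw_kernel_def by (intro prod_zero bexI[of _ i] srw1_prob_eq_0_if_abs_gt) auto
qed

lemma sum_srw_kernel_le: "(\<Sum>z\<in>cube L. srw_kernel N z) \<le> 1"
proof -
  have "(\<Sum>z\<in>cube L. srw_kernel N z) = (\<Prod>i\<in>UNIV. \<Sum>c\<in>{- int L .. int L}. srw1_prob (N i) c)"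
    unfolding cube_def srw_kernel_def by (rule sum_prod_vec_Pi) simp
  also have "\<dots> \<le> 1"
    using srw1_prob_sum_le[of "{- int L .. int L}" _ 0]
    by (intro prod_le_1) (simp add: sum_nonneg srw1_prob_nonneg)
  finally show ?thesis .
qed

lemma kernel_avg_eq_sum_cube:
  "sum N UNIV \<le> L \<Longrightarrow> (\<Sum>z\<in>cube L. srw_kernel N z * f (x + z)) = kernel_avg N f x"
  unfolding kernel_avg_def
  by (rule sum.mono_neutral_right) (auto simp: cube_mono srw_kernel_eq_0)

lemma kernel_avg_le_1: "(\<And>y. f y \<le> 1) \<Longrightarrow> kernel_avg N f x \<le> 1"
proof -
  assume "\<And>y. f y \<le> 1"
  then have "kernel_avg N f x \<le> (\<Sum>z\<in>cube (sum N UNIV). srw_kernel N z)"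
    unfolding kernel_avg_def by (intro sum_mono mult_left_le srw_kernel_nonneg)
  also have "\<dots> \<le> 1"
    by (rule sum_srw_kernel_le)
  finally show ?thesis .
qed

lemma kernel_avg_0: "kernel_avg (\<lambda>_. 0) f x = f x"
  by (simp add: kernel_avg_def srw_kernel_def)

lemma sum_cube_shift:
  fixes g \<phi> :: "int ^ 'd::finite \<Rightarrow> real"
  assumes g: "\<And>z. z \<notin> cube M \<Longrightarrow> g z = 0" and e: "\<And>l. \<bar>e $ l\<bar> \<le> 1"
  shows "(\<Sum>z\<in>cube (Suc M). g z * \<phi> (z + e)) = (\<Sum>z\<in>cube (Suc M). g (z - e) * \<phi> z)"
proof -
  have shift: "(\<lambda>z. z + e) ` cube M \<subseteq> cube (Suc M)"
  proof
    fix w assume "w \<in> (\<lambda>z. z + e) ` cube M"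
    then obtain z where z: "z \<in> cube M" and w: "w = z + e" by auto
    show "w \<in> cube (Suc M)"
      unfolding mem_cube_iff
    proof
      fix i
      show "\<bar>w $ i\<bar> \<le> int (Suc M)"
        using abs_triangle_ineq[of "z $ i" "e $ i"] e[of i] z[unfolded mem_cube_iff, rule_format, of i]
        by (simp add: w)
    qed
  qed
  have "(\<Sum>z\<in>cube (Suc M). g z * \<phi> (z + e)) = (\<Sum>z\<in>cube M. g z * \<phi> (z + e))"
    by (rule sum.mono_neutral_right) (auto simp: cube_mono g)
  also have "\<dots> = (\<Sum>w\<in>(\<lambda>z. z + e) ` cube M. g (w - e) * \<phi> w)"
    by (subst sum.reindex) (auto simp: inj_on_def)
  also have "\<dots> = (\<Sum>w\<in>cube (Suc M). g (w - e) * \<phi> w)"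
  proof (rule sum.mono_neutral_left[OF finite_cube shift], safe)
    fix w assume "w \<in> cube (Suc M)" "w \<notin> (\<lambda>z. z + e) ` cube M"
    then have "w - e \<notin> cube M"
      by (metis (no_types, lifting) diff_add_cancel image_eqI)
    then show "g (w - e) * \<phi> w = 0"
      by (simp add: g)
  qed
  finally show ?thesis .
qed

definition coord_avg :: "'d::finite \<Rightarrow> (int ^ 'd \<Rightarrow> real) \<Rightarrow> int ^ 'd \<Rightarrow> real" where
  "coord_avg i g x = (g (x + axis i 1) + g (x - axis i 1)) / 2"

lemma axis_nth_eq: "axis i x $ j = (if j = i then x else 0)"
  by (simp add: axis_def)

lemma srw_kernel_split:
  fixes N :: "'d::finite \<Rightarrow> nat" and i :: 'd
  defines "R z \<equiv> (\<Prod>l\<in>UNIV - {i}. srw1_prob (N l) (z $ l))"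
  shows "srw_kernel N (z - axis i 1) = srw1_prob (N i) (z $ i - 1) * R z"
    and "srw_kernel N (z + axis i 1) = srw1_prob (N i) (z $ i + 1) * R z"
    and "srw_kernel (N(i := Suc (N i))) z = srw1_prob (Suc (N i)) (z $ i) * R z"
  unfolding srw_kernel_def R_def
  by (subst prod.remove[of UNIV i]; auto simp: axis_nth_eq intro!: prod.cong)+

lemma sum_fun_upd_Suc: "sum (N(i := Suc (N i))) UNIV = Suc (sum N UNIV)" for N :: "'d::finite \<Rightarrow> nat"
  by (simp add: sum.remove[of UNIV i] sum.cong[of "UNIV - {i}" _ "N(i := Suc (N i))" N])

lemma kernel_avg_coord_avg: "coord_avg i (kernel_avg N f) x = kernel_avg (N(i := Suc (N i))) f x"
proof -
  define M where "M = sum N UNIV"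
  have vanish: "z \<notin> cube M \<Longrightarrow> srw_kernel N z = 0" for z
    by (simp add: M_def srw_kernel_eq_0)
  have shifted: "kernel_avg N f (x + e) = (\<Sum>z\<in>cube (Suc M). srw_kernel N (z - e) * f (x + z))"
    if "\<And>l. \<bar>e $ l\<bar> \<le> 1" for e
  proof -
    have "(\<Sum>z\<in>cube (Suc M). srw_kernel N z * f (x + (z + e)))
        = (\<Sum>z\<in>cube (Suc M). srw_kernel N (z - e) * f (x + z))"
      using sum_cube_shift[where \<phi> = "\<lambda>w. f (x + w)", OF vanish that] by simp
    then show ?thesis
      by (simp add: kernel_avg_eq_sum_cube[symmetric, of _ "Suc M"] M_def add_ac)
  qed
  have "coord_avg i (kernel_avg N f) x
      = ((\<Sum>z\<in>cube (Suc M). srw_kernel N (z - axis i 1) * f (x + z))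
         + (\<Sum>z\<in>cube (Suc M). srw_kernel N (z + axis i 1) * f (x + z))) / 2"
    unfolding coord_avg_def
    using shifted[of "axis i 1"] shifted[of "- axis i 1"] by (simp add: axis_nth_eq)
  also have "\<dots> = (\<Sum>z\<in>cube (Suc M). srw_kernel (N(i := Suc (N i))) z * f (x + z))"
    unfolding sum.distrib[symmetric] sum_divide_distrib
    by (intro sum.cong refl) (simp add: srw_kernel_split algebra_simps add_divide_distrib)
  also have "\<dots> = kernel_avg (N(i := Suc (N i))) f x"
    unfolding kernel_avg_def sum_fun_upd_Suc M_def ..
  finally show ?thesis .
qed

definition srw_op :: "(int ^ 'd::finite \<Rightarrow> real) \<Rightarrow> int ^ 'd \<Rightarrow> real" where
  "srw_op g x = (\<Sum>i\<in>UNIV. coord_avg i g x) / real CARD('d)"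

text \<open>\<open>counts_avg j F\<close> is the expectation of \<open>F N\<close>, where \<open>N i\<close> counts how often coordinate \<open>i\<close>
  is drawn in \<open>j\<close> independent uniform draws of a coordinate.\<close>

fun counts_avg :: "nat \<Rightarrow> (('d::finite \<Rightarrow> nat) \<Rightarrow> real) \<Rightarrow> real" where
  "counts_avg 0 F = F (\<lambda>_. 0)"
| "counts_avg (Suc j) F = (\<Sum>i\<in>UNIV. counts_avg j (\<lambda>N. F (N(i := Suc (N i))))) / real CARD('d)"

lemma counts_avg_add: "counts_avg j (\<lambda>N. F N + G N) = counts_avg j F + counts_avg j G"
  by (induction j arbitrary: F G) (simp_all add: sum.distrib add_divide_distrib)

lemma counts_avg_divide: "counts_avg j (\<lambda>N. F N / c) = counts_avg j F / c"
  by (induction j arbitrary: F) (simp_all add: sum_divide_distrib ac_simps)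

lemma counts_avg_const: "counts_avg j (\<lambda>N. c) = c"
  by (induction j arbitrary: c) simp_all

lemma counts_avg_mono: "(\<And>N. F N \<le> G N) \<Longrightarrow> counts_avg j F \<le> counts_avg j G"
proof (induction j arbitrary: F G)
  case (Suc j)
  then show ?case
    by (simp add: divide_right_mono sum_mono)
qed simp

lemma counts_avg_sum: "finite S \<Longrightarrow> counts_avg j (\<lambda>N. \<Sum>i\<in>S. F i N) = (\<Sum>i\<in>S. counts_avg j (F i))"
  by (induction S rule: finite_induct) (simp_all add: counts_avg_const counts_avg_add)

lemma coord_avg_counts_avg: "coord_avg i (\<lambda>y. counts_avg j (\<lambda>N. G N y)) x = counts_avg j (\<lambda>N. coord_avg i (G N) x)"
  by (simp only: coord_avg_def counts_avg_divide counts_avg_add)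

text \<open>A step of the \<open>d\<close>-dimensional walk moves a uniformly chosen coordinate; hence after \<open>j\<close>
  steps the coordinates are independent one-dimensional walks with random step counts.\<close>

lemma srw_op_power:
  fixes f :: "int ^ 'd::finite \<Rightarrow> real"
  shows "(srw_op ^^ j) f x = counts_avg j (\<lambda>N. kernel_avg N f x)"
proof (induction j arbitrary: x)
  case (Suc j)
  have "(srw_op ^^ Suc j) f x = (\<Sum>i\<in>UNIV. coord_avg i (\<lambda>y. counts_avg j (\<lambda>N. kernel_avg N f y)) x) / real CARD('d)"
    by (simp add: srw_op_def Suc.IH[abs_def])
  also have "\<dots> = counts_avg (Suc j) (\<lambda>N. kernel_avg N f x)"
    by (simp add: coord_avg_counts_avg kernel_avg_coord_avg)
  finally show ?case .
qed (simp add: kernel_avg_0)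

section \<open>Expected number of visits\<close>

definition grid_density_le :: "nat \<Rightarrow> (int ^ 'd::finite) set \<Rightarrow> real \<Rightarrow> bool" where
  "grid_density_le r \<Lambda> \<rho> \<longleftrightarrow> (\<forall>x. (\<forall>i. (2 * int r) dvd x $ i) \<longrightarrow>
     real (card (\<Lambda> \<inter> box_Q x (int r))) \<le> \<rho> * real (card (box_Q x (int r))))"

definition block_of :: "nat \<Rightarrow> int ^ 'd::finite \<Rightarrow> int ^ 'd" where
  "block_of r y = (\<chi> i. (y $ i + int r) div (2 * int r))"

lemma card_block_of_eq_le:
  fixes \<Lambda> :: "(int ^ 'd::finite) set"
  assumes "0 < r" and "grid_density_le r \<Lambda> \<rho>" and "finite S"
  shows "real (card {y \<in> \<Lambda> \<inter> S. block_of r y = b}) \<le> \<rho> * (2 * real r) ^ CARD('d)"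
proof -
  define x :: "int ^ 'd" where "x = (\<chi> i. 2 * int r * b $ i)"
  have "{y \<in> \<Lambda> \<inter> S. block_of r y = b} \<subseteq> \<Lambda> \<inter> box_Q x (int r)"
    using mem_block_iff[OF assms(1)]
    by (auto simp: block_of_def box_Q_def x_def block_def vec_eq_iff)
  then have "card {y \<in> \<Lambda> \<inter> S. block_of r y = b} \<le> card (\<Lambda> \<inter> box_Q x (int r))"
    by (intro card_mono) (simp_all add: finite_box_Q)
  also have "real \<dots> \<le> \<rho> * real (card (box_Q x (int r)))"
    using assms(2) unfolding grid_density_le_def by (simp add: x_def)
  also have "\<dots> = \<rho> * (2 * real r) ^ CARD('d)"
    by (simp only: card_box_Q)
  finally show ?thesis
    by simp
qed

lemma sum_prod_le_block_max:
  fixes f :: "'d::finite \<Rightarrow> int \<Rightarrow> real"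
  assumes "0 < r" and "0 \<le> \<rho>" and "grid_density_le r \<Lambda> \<rho>"
    and f_nonneg: "\<And>i w. 0 \<le> f i w" and W: "\<And>i. finite (W i)"
  defines "C i \<equiv> (\<lambda>w. (w + int r) div (2 * int r)) ` W i"
  shows "(\<Sum>y\<in>\<Lambda> \<inter> vec_Pi W. \<Prod>i\<in>UNIV. f i (y $ i))
    \<le> \<rho> * (2 * real r) ^ CARD('d) * (\<Prod>i\<in>UNIV. \<Sum>c\<in>C i. block_max (f i) r c)"
proof -
  let ?m = "\<lambda>b. \<Prod>i\<in>UNIV. block_max (f i) r (b $ i)"
  have W': "finite (vec_Pi W)"
    using W by (simp add: finite_vec_Pi)
  have fin: "finite (\<Lambda> \<inter> vec_Pi W)" "finite (vec_Pi C)"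
    using W W' by (simp_all add: finite_vec_Pi C_def)
  have "(\<Sum>y\<in>\<Lambda> \<inter> vec_Pi W. \<Prod>i\<in>UNIV. f i (y $ i))
      = (\<Sum>b\<in>vec_Pi C. \<Sum>y\<in>{y \<in> \<Lambda> \<inter> vec_Pi W. block_of r y = b}. \<Prod>i\<in>UNIV. f i (y $ i))"
    by (rule sum.group[symmetric, OF fin]) (auto simp: block_of_def vec_Pi_def C_def)
  also have "\<dots> \<le> (\<Sum>b\<in>vec_Pi C. \<rho> * (2 * real r) ^ CARD('d) * ?m b)"
  proof (rule sum_mono)
    fix b
    have "f i (y $ i) \<le> block_max (f i) r (b $ i)" if "block_of r y = b" for y i
      using that mem_block_iff[OF assms(1)] by (intro block_max_ge) (auto simp: block_of_def)
    then have "(\<Sum>y\<in>{y \<in> \<Lambda> \<inter> vec_Pi W. block_of r y = b}. \<Prod>i\<in>UNIV. f i (y $ i))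
        \<le> real (card {y \<in> \<Lambda> \<inter> vec_Pi W. block_of r y = b}) * ?m b"
      by (intro sum_bounded_above prod_mono) (auto simp: f_nonneg)
    also have "\<dots> \<le> \<rho> * (2 * real r) ^ CARD('d) * ?m b"
      using card_block_of_eq_le[OF assms(1,3) W' , of b] f_nonneg
      by (intro mult_right_mono prod_nonneg block_max_nonneg[OF assms(1)]) simp_all
    finally show "(\<Sum>y\<in>{y \<in> \<Lambda> \<inter> vec_Pi W. block_of r y = b}. \<Prod>i\<in>UNIV. f i (y $ i))
        \<le> \<rho> * (2 * real r) ^ CARD('d) * ?m b" .
  qed
  also have "\<dots> = \<rho> * (2 * real r) ^ CARD('d) * (\<Prod>i\<in>UNIV. \<Sum>c\<in>C i. block_max (f i) r c)"
    using sum_prod_vec_Pi[of C "\<lambda>i. block_max (f i) r"] W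
    by (simp only: sum_distrib_left[symmetric]) (simp add: C_def)
  finally show ?thesis .
qed

lemma kernel_avg_indicator_le:
  fixes \<Lambda> :: "(int ^ 'd::finite) set"
  assumes "0 < r" and "0 \<le> \<rho>" and "grid_density_le r \<Lambda> \<rho>"
  shows "kernel_avg N (indicator \<Lambda>) x
    \<le> \<rho> * (2 * real r) ^ CARD('d) * (\<Prod>i\<in>UNIV. 3 / sqrt (real (N i) + 1) + 2 / real r)"
proof -
  define L where "L = sum N UNIV"
  define W where "W i = {x $ i - int L .. x $ i + int L}" for i
  have fin: "finite (vec_Pi W)"
    by (rule finite_vec_Pi) (simp add: W_def)
  have shift: "x + z \<in> vec_Pi W \<longleftrightarrow> z \<in> cube L" for z
  proof -
    have "x $ i + z $ i \<in> W i \<longleftrightarrow> \<bar>z $ i\<bar> \<le> int L" for i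
      by (auto simp: W_def)
    then show ?thesis
      by (simp add: vec_Pi_def mem_cube_iff)
  qed
  have "kernel_avg N (indicator \<Lambda>) x = (\<Sum>z\<in>cube L. srw_kernel N z * indicator \<Lambda> (x + z))"
    by (simp add: kernel_avg_def L_def)
  also have "\<dots> = (\<Sum>y\<in>vec_Pi W. srw_kernel N (y - x) * indicator \<Lambda> y)"
    by (rule sum.reindex_bij_witness[of _ "\<lambda>y. y - x" "\<lambda>z. x + z"])
      (auto simp flip: shift)
  also have "\<dots> = (\<Sum>y\<in>\<Lambda> \<inter> vec_Pi W. \<Prod>i\<in>UNIV. srw1_prob (N i) (y $ i - x $ i))"
    using fin by (simp add: srw_kernel_def indicator_def sum.inter_restrict Int_commute)
  also have "\<dots> \<le> \<rho> * (2 * real r) ^ CARD('d)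
      * (\<Prod>i\<in>UNIV. \<Sum>c\<in>(\<lambda>w. (w + int r) div (2 * int r)) ` W i.
           block_max (\<lambda>w. srw1_prob (N i) (w - x $ i)) r c)"
    using assms by (intro sum_prod_le_block_max) (simp_all add: srw1_prob_nonneg W_def)
  also have "\<dots> \<le> \<rho> * (2 * real r) ^ CARD('d) * (\<Prod>i\<in>UNIV. 3 / sqrt (real (N i) + 1) + 2 / real r)"
    using assms(1,2)
    by (intro mult_left_mono prod_mono conjI sum_nonneg block_max_nonneg srw1_sum_block_max_le)
      (simp_all add: srw1_prob_nonneg W_def)
  finally show ?thesis .
qed

lemma inverse_sqrt_cube_le:
  assumes "0 < x"
  shows "1 / sqrt (x + 1) ^ 3 \<le> 2 * (1 / sqrt x - 1 / sqrt (x + 1))"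
proof -
  define a b where "a = sqrt x" and "b = sqrt (x + 1)"
  have a: "0 < a" and b: "0 < b" and "a \<le> b"
    using assms by (simp_all add: a_def b_def)
  have "(b - a) * (b + a) = 1"
    using assms by (simp add: a_def b_def algebra_simps)
  then have bma: "b - a = 1 / (b + a)"
    using a b by (simp add: field_simps)
  have "1 / a - 1 / b = (b - a) / (a * b)"
    using a b by (simp add: field_simps)
  also have "\<dots> = 1 / (a * b * (a + b))"
    unfolding bma using a b by (simp add: field_simps)
  finally have diff: "1 / a - 1 / b = 1 / (a * b * (a + b))" .
  have "a * b * (a + b) \<le> b * b * (b + b)"
    using a b \<open>a \<le> b\<close> by (intro mult_mono) simp_all
  then have "a * b * (a + b) \<le> 2 * b ^ 3"
    by (simp add: power3_eq_cube algebra_simps)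
  then have "1 / (2 * b ^ 3) \<le> 1 / a - 1 / b"
    unfolding diff using a b by (intro divide_left_mono) (auto intro!: mult_pos_pos)
  then show ?thesis
    by (simp add: a_def b_def field_simps)
qed

lemma sum_inverse_sqrt_cube_le:
  assumes "1 \<le> n\<^sub>0"
  shows "(\<Sum>n\<in>{n\<^sub>0..<m}. 1 / sqrt (real n + 1) ^ 3) \<le> 2 / sqrt (real n\<^sub>0)"
proof (cases "n\<^sub>0 \<le> m")
  case True
  have "(\<Sum>n\<in>{n\<^sub>0..<m}. 1 / sqrt (real n + 1) ^ 3)
      \<le> (\<Sum>n\<in>{n\<^sub>0..<m}. - 2 / sqrt (real (Suc n)) - - 2 / sqrt (real n))"
  proof (rule sum_mono)
    fix n assume "n \<in> {n\<^sub>0..<m}"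
    with assms have "0 < real n" by simp
    from inverse_sqrt_cube_le[OF this]
    show "1 / sqrt (real n + 1) ^ 3 \<le> - 2 / sqrt (real (Suc n)) - - 2 / sqrt (real n)"
      by (simp add: add.commute)
  qed
  also have "\<dots> = - 2 / sqrt (real m) + 2 / sqrt (real n\<^sub>0)"
    using sum_Suc_diff'[OF True, of "\<lambda>n. - 2 / sqrt (real n)"] by simp
  also have "\<dots> \<le> 2 / sqrt (real n\<^sub>0)"
    by simp
  finally show ?thesis .
qed simp

lemma sum_tail_inverse_sqrt_power_le:
  assumes "0 \<le> A" and "3 \<le> D" and "1 \<le> n\<^sub>0"
  shows "(\<Sum>n\<in>{n\<^sub>0..<m}. A / sqrt (real n + 1) ^ D) \<le> 2 * A / sqrt (real n\<^sub>0) ^ (D - 2)"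
proof -
  have "(\<Sum>n\<in>{n\<^sub>0..<m}. A / sqrt (real n + 1) ^ D)
      \<le> (\<Sum>n\<in>{n\<^sub>0..<m}. A / sqrt (real n\<^sub>0) ^ (D - 3) * (1 / sqrt (real n + 1) ^ 3))"
  proof (rule sum_mono)
    fix n assume "n \<in> {n\<^sub>0..<m}"
    then have "sqrt (real n\<^sub>0) ^ (D - 3) * sqrt (real n + 1) ^ 3 \<le> sqrt (real n + 1) ^ (D - 3) * sqrt (real n + 1) ^ 3"
      by (intro mult_right_mono power_mono) auto
    also have "\<dots> = sqrt (real n + 1) ^ D"
      using assms(2) by (simp add: power_add[symmetric])
    finally show "A / sqrt (real n + 1) ^ D \<le> A / sqrt (real n\<^sub>0) ^ (D - 3) * (1 / sqrt (real n + 1) ^ 3)"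
      using assms by (simp add: divide_left_mono)
  qed
  also have "\<dots> = A / sqrt (real n\<^sub>0) ^ (D - 3) * (\<Sum>n\<in>{n\<^sub>0..<m}. 1 / sqrt (real n + 1) ^ 3)"
    by (rule sum_distrib_left[symmetric])
  also have "\<dots> \<le> A / sqrt (real n\<^sub>0) ^ (D - 3) * (2 / sqrt (real n\<^sub>0))"
    using assms by (intro mult_left_mono sum_inverse_sqrt_cube_le) auto
  also have "\<dots> = 2 * A / sqrt (real n\<^sub>0) ^ (D - 2)"
  proof -
    have "D - 2 = Suc (D - 3)"
      using assms(2) by simp
    then show ?thesis
      by (simp only: power_Suc2) simp
  qed
  finally show ?thesis .
qed

lemma ceiling_powr_mult_min_one_le:
  fixes A :: real
  assumes "0 < A" and "2 \<le> D"
  shows "real (nat \<lceil>A powr (2 / real D)\<rceil>) * min 1 A \<le> 2 * A powr (2 / real D)"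
proof (cases "1 \<le> A")
  case True
  then have "1 \<le> A powr (2 / real D)"
    by (intro ge_one_powr_ge_zero) auto
  then show ?thesis
    using True by linarith
next
  case False
  then have "A powr (2 / real D) \<le> 1" and "A \<le> A powr (2 / real D)"
    using assms powr_mono'[of "2 / real D" 1 A] by (auto intro: powr_le1)
  moreover have "0 < A powr (2 / real D)"
    using assms by simp
  ultimately have "nat \<lceil>A powr (2 / real D)\<rceil> = 1"
    by linarith
  with False have "real (nat \<lceil>A powr (2 / real D)\<rceil>) * min 1 A = A"
    by simp
  then show ?thesis
    using \<open>A \<le> A powr (2 / real D)\<close> powr_ge_zero[of A "2 / real D"] by linarith
qed

lemma sqrt_power_eq_powr:
  assumes "0 < x"
  shows "sqrt x ^ k = x powr (real k / 2)"
proof -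
  have "sqrt x ^ k = (x powr (1 / 2)) ^ k"
    using assms by (simp add: powr_half_sqrt)
  also have "\<dots> = x powr (real k * (1 / 2))"
    using assms by (subst powr_power) simp_all
  finally show ?thesis
    by simp
qed

lemma mult_div_sqrt_power_le_powr:
  fixes A :: real
  assumes "0 < A" and "3 \<le> D" and "A powr (2 / real D) \<le> real n\<^sub>0"
  shows "2 * A / sqrt (real n\<^sub>0) ^ (D - 2) \<le> 2 * A powr (2 / real D)"
proof -
  have n\<^sub>0: "0 < real n\<^sub>0"
    using assms powr_gt_zero[of A "2 / real D"] by linarith
  have "2 / real D * (real (D - 2) / 2) = 1 - 2 / real D"
    using assms(2) by (simp add: field_simps of_nat_diff)
  then have "A powr (1 - 2 / real D) = (A powr (2 / real D)) powr (real (D - 2) / 2)"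
    by (simp add: powr_powr)
  also have "\<dots> \<le> real n\<^sub>0 powr (real (D - 2) / 2)"
    using assms by (intro powr_mono2) auto
  also have "\<dots> = sqrt (real n\<^sub>0) ^ (D - 2)"
    using n\<^sub>0 by (rule sqrt_power_eq_powr[symmetric])
  finally have "2 * A / sqrt (real n\<^sub>0) ^ (D - 2) \<le> 2 * A / A powr (1 - 2 / real D)"
    using assms(1) n\<^sub>0 by (intro divide_left_mono) auto
  also have "\<dots> = 2 * A powr (2 / real D)"
    using assms(1) by (simp add: powr_diff)
  finally show ?thesis .
qed

lemma sum_min_one_inverse_sqrt_power_le:
  fixes A :: real
  assumes "0 < A" and "3 \<le> D"
  shows "(\<Sum>n<m. min 1 (A / sqrt (real n + 1) ^ D)) \<le> 4 * A powr (2 / real D)"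
proof -
  define t where "t = A powr (2 / real D)"
  define n\<^sub>0 where "n\<^sub>0 = nat \<lceil>t\<rceil>"
  let ?f = "\<lambda>n. min 1 (A / sqrt (real n + 1) ^ D)"
  have "0 < t"
    using assms by (simp add: t_def)
  then have n\<^sub>0: "t \<le> real n\<^sub>0" "1 \<le> n\<^sub>0"
    by (simp_all add: n\<^sub>0_def Suc_le_eq)
  have "(\<Sum>n<m. ?f n) \<le> (\<Sum>n\<in>{..<n\<^sub>0} \<union> {n\<^sub>0..<m}. ?f n)"
    using assms by (intro sum_mono2) auto
  also have "\<dots> = (\<Sum>n<n\<^sub>0. ?f n) + (\<Sum>n\<in>{n\<^sub>0..<m}. ?f n)"
    by (rule sum.union_disjoint) auto
  also have "(\<Sum>n<n\<^sub>0. ?f n) \<le> real n\<^sub>0 * min 1 A"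
  proof -
    have "?f n \<le> min 1 A" for n
    proof -
      have "1 \<le> sqrt (real n + 1) ^ D"
        by (simp add: one_le_power)
      then have "A / sqrt (real n + 1) ^ D \<le> A / 1"
        using assms by (intro divide_left_mono) auto
      then show ?thesis
        by simp
    qed
    then show ?thesis
      using sum_bounded_above[of "{..<n\<^sub>0}" ?f "min 1 A"] by simp
  qed
  also have "\<dots> \<le> 2 * t"
    using ceiling_powr_mult_min_one_le[of A D] assms by (simp add: n\<^sub>0_def t_def)
  also have "(\<Sum>n\<in>{n\<^sub>0..<m}. ?f n) \<le> (\<Sum>n\<in>{n\<^sub>0..<m}. A / sqrt (real n + 1) ^ D)"
    by (intro sum_mono) simp
  also have "\<dots> \<le> 2 * A / sqrt (real n\<^sub>0) ^ (D - 2)"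
    using assms n\<^sub>0 by (intro sum_tail_inverse_sqrt_power_le) auto
  also have "\<dots> \<le> 2 * t"
    using assms n\<^sub>0 unfolding t_def by (intro mult_div_sqrt_power_le_powr) auto
  finally show ?thesis
    by (simp add: t_def)
qed

fun binom_prob :: "real \<Rightarrow> nat \<Rightarrow> nat \<Rightarrow> real" where
  "binom_prob p 0 n = (if n = 0 then 1 else 0)"
| "binom_prob p (Suc j) n = (1 - p) * binom_prob p j n + (if n = 0 then 0 else p * binom_prob p j (n - 1))"

lemma binom_prob_eq_0: "j < n \<Longrightarrow> binom_prob p j n = 0"
  by (induction j arbitrary: n) auto

lemma sum_binom_prob_le:
  assumes "0 < p" and "p \<le> 1"
  shows "(\<Sum>j<m. binom_prob p j n) \<le> 1 / p"
proof (induction m arbitrary: n)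
  case (Suc m)
  have "(\<Sum>j<Suc m. binom_prob p j n) = binom_prob p 0 n + (\<Sum>j<m. binom_prob p (Suc j) n)"
    by (rule sum.lessThan_Suc_shift)
  also have "\<dots> = binom_prob p 0 n + (1 - p) * (\<Sum>j<m. binom_prob p j n)
        + (if n = 0 then 0 else p * (\<Sum>j<m. binom_prob p j (n - 1)))"
    by (simp add: sum.distrib sum_distrib_left)
  also have "\<dots> \<le> binom_prob p 0 n + (1 - p) * (1 / p) + (if n = 0 then 0 else p * (1 / p))"
  proof -
    have "(1 - p) * (\<Sum>j<m. binom_prob p j n) \<le> (1 - p) * (1 / p)"
      using Suc.IH[of n] assms by (intro mult_left_mono) auto
    moreover have "p * (\<Sum>j<m. binom_prob p j (n - 1)) \<le> p * (1 / p)"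
      using Suc.IH[of "n - 1"] assms by (intro mult_left_mono) auto
    ultimately show ?thesis
      by (cases "n = 0") simp_all
  qed
  also have "\<dots> = 1 / p"
    using assms by (simp add: field_simps)
  finally show ?case .
qed (use assms in simp)

lemma counts_avg_coord:
  fixes i :: "'d::finite"
  shows "counts_avg j (\<lambda>N. g (N i)) = (\<Sum>n\<le>j. binom_prob (1 / real CARD('d)) j n * g n)"
proof (induction j arbitrary: g)
  case (Suc j)
  define p where "p = 1 / real CARD('d)"
  have "(\<Sum>l\<in>UNIV. counts_avg j (\<lambda>N. g ((N(l := Suc (N l))) i)))
      = counts_avg j (\<lambda>N. g (Suc (N i))) + (\<Sum>l\<in>UNIV - {i}. counts_avg j (\<lambda>N. g (N i)))"
    by (subst sum.remove[of UNIV i]) (auto intro!: sum.cong)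
  also have "\<dots> = (\<Sum>n\<le>j. binom_prob p j n * g (Suc n)) + (real CARD('d) - 1) * (\<Sum>n\<le>j. binom_prob p j n * g n)"
    using Suc.IH[of g] Suc.IH[of "\<lambda>n. g (Suc n)"]
    by (simp add: p_def card_Diff_singleton of_nat_diff)
  finally have "counts_avg (Suc j) (\<lambda>N. g (N i))
      = (1 - p) * (\<Sum>n\<le>j. binom_prob p j n * g n) + p * (\<Sum>n\<le>j. binom_prob p j n * g (Suc n))"
    by (simp add: p_def field_simps)
  also have "\<dots> = (\<Sum>n\<le>Suc j. (1 - p) * (binom_prob p j n * g n))
      + (\<Sum>n\<le>Suc j. if n = 0 then 0 else p * binom_prob p j (n - 1) * g n)"
  proof -
    have "(\<Sum>n\<le>Suc j. (1 - p) * (binom_prob p j n * g n)) = (1 - p) * (\<Sum>n\<le>j. binom_prob p j n * g n)"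
      by (simp add: sum_distrib_left binom_prob_eq_0)
    moreover have "(\<Sum>n\<le>Suc j. if n = 0 then 0 else p * binom_prob p j (n - 1) * g n)
        = p * (\<Sum>n\<le>j. binom_prob p j n * g (Suc n))"
      by (subst sum.atMost_Suc_shift) (simp add: sum_distrib_left algebra_simps)
    ultimately show ?thesis
      by simp
  qed
  also have "\<dots> = (\<Sum>n\<le>Suc j. binom_prob p (Suc j) n * g n)"
    by (subst sum.distrib[symmetric], rule sum.cong) (simp_all add: algebra_simps)
  finally show ?case
    by (simp add: p_def)
qed simp

lemma sum_counts_avg_coord_le:
  fixes i :: "'d::finite"
  assumes "\<And>n. 0 \<le> g n"
  shows "(\<Sum>j<m. counts_avg j (\<lambda>N. g (N i))) \<le> real CARD('d) * (\<Sum>n<m. g n)"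
proof -
  define p where "p = 1 / real CARD('d)"
  have "(\<Sum>j<m. counts_avg j (\<lambda>N. g (N i))) = (\<Sum>j<m. \<Sum>n<m. binom_prob p j n * g n)"
  proof (rule sum.cong[OF refl])
    fix j assume "j \<in> {..<m}"
    then have "(\<Sum>n\<le>j. binom_prob p j n * g n) = (\<Sum>n<m. binom_prob p j n * g n)"
      by (intro sum.mono_neutral_left) (auto simp: binom_prob_eq_0)
    then show "counts_avg j (\<lambda>N. g (N i)) = (\<Sum>n<m. binom_prob p j n * g n)"
      by (simp add: counts_avg_coord p_def)
  qed
  also have "\<dots> = (\<Sum>n<m. g n * (\<Sum>j<m. binom_prob p j n))"
    by (subst sum.swap) (simp add: sum_distrib_left mult.commute)
  also have "\<dots> \<le> (\<Sum>n<m. g n * real CARD('d))"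
    using sum_binom_prob_le[of p] assms by (intro sum_mono mult_left_mono) (simp_all add: p_def)
  finally show ?thesis
    by (simp add: sum_distrib_left mult.commute)
qed

lemma prod_le_sum_power_card:
  fixes m :: "'i \<Rightarrow> real"
  assumes "finite I" and "I \<noteq> {}" and "\<And>i. 0 \<le> m i"
  shows "(\<Prod>i\<in>I. m i) \<le> (\<Sum>i\<in>I. m i ^ card I)"
proof -
  have "Max (m ` I) \<in> m ` I"
    using assms by (intro Max_in) auto
  then obtain i\<^sub>0 where "i\<^sub>0 \<in> I" and max: "m i\<^sub>0 = Max (m ` I)"
    by auto
  then have "(\<Prod>i\<in>I. m i) \<le> (\<Prod>i\<in>I. m i\<^sub>0)"
    using assms by (intro prod_mono) simp
  also have "\<dots> = m i\<^sub>0 ^ card I"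
    by simp
  also have "\<dots> \<le> (\<Sum>i\<in>I. m i ^ card I)"
    using \<open>i\<^sub>0 \<in> I\<close> assms by (intro member_le_sum) simp_all
  finally show ?thesis .
qed

lemma min_one_add_sum_le:
  fixes b :: "'i \<Rightarrow> real"
  assumes "0 \<le> c" and "\<And>i. 0 \<le> b i" and "finite S"
  shows "min 1 (c + (\<Sum>i\<in>S. b i)) \<le> c + (\<Sum>i\<in>S. min 1 (b i))"
proof (cases "\<exists>i\<in>S. 1 \<le> b i")
  case True
  then obtain i where "i \<in> S" "1 \<le> b i" by blast
  then have "1 \<le> (\<Sum>i\<in>S. min 1 (b i))"
    using assms member_le_sum[of i S "\<lambda>i. min 1 (b i)"] by simp
  with assms(1) show ?thesis
    by linarith
next
  case False
  then have "(\<Sum>i\<in>S. min 1 (b i)) = (\<Sum>i\<in>S. b i)"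
    by (intro sum.cong) auto
  then show ?thesis
    by simp
qed

lemma min_one_prod_le:
  fixes s :: "'d::finite \<Rightarrow> real"
  assumes "0 < r" and "0 \<le> \<rho>" and "\<And>i. 0 \<le> s i"
  shows "min 1 (\<rho> * (2 * r) ^ CARD('d) * (\<Prod>i\<in>UNIV. 3 * s i + 2 / r))
    \<le> real CARD('d) * (\<rho> * 10 ^ CARD('d)) + (\<Sum>i\<in>UNIV. min 1 (\<rho> * 10 ^ CARD('d) * (r * s i) ^ CARD('d)))"
proof -
  let ?D = "CARD('d)"
  have "(2 * r) ^ ?D * (\<Prod>i\<in>UNIV. 3 * s i + 2 / r) = (\<Prod>i\<in>UNIV. 2 * r * (3 * s i + 2 / r))"
    by (simp add: prod.distrib)
  also have "\<dots> = (\<Prod>i\<in>UNIV. 6 * (r * s i) + 4)"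
    using assms(1) by (intro prod.cong) (simp_all add: field_simps)
  also have "\<dots> \<le> (\<Prod>i\<in>(UNIV :: 'd set). 10 * max 1 (r * s i))"
    using assms by (intro prod_mono) (auto simp: max_def)
  also have "\<dots> = 10 ^ ?D * (\<Prod>i\<in>UNIV. max 1 (r * s i))"
    by (simp add: prod.distrib)
  also have "\<dots> \<le> 10 ^ ?D * (\<Sum>i\<in>UNIV. max 1 (r * s i) ^ ?D)"
    by (intro mult_left_mono prod_le_sum_power_card) auto
  also have "\<dots> \<le> 10 ^ ?D * (\<Sum>i\<in>(UNIV :: 'd set). 1 + (r * s i) ^ ?D)"
    using assms by (intro mult_left_mono sum_mono) (auto simp: max_def)
  finally have "\<rho> * ((2 * r) ^ ?D * (\<Prod>i\<in>UNIV. 3 * s i + 2 / r))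
      \<le> \<rho> * (10 ^ ?D * (\<Sum>i\<in>(UNIV :: 'd set). 1 + (r * s i) ^ ?D))"
    using assms(2) by (rule mult_left_mono)
  also have "\<dots> = real ?D * (\<rho> * 10 ^ ?D) + (\<Sum>i\<in>UNIV. \<rho> * 10 ^ ?D * (r * s i) ^ ?D)"
    by (simp add: sum.distrib sum_distrib_left algebra_simps)
  finally have "\<rho> * (2 * r) ^ ?D * (\<Prod>i\<in>UNIV. 3 * s i + 2 / r)
      \<le> real ?D * (\<rho> * 10 ^ ?D) + (\<Sum>i\<in>UNIV. \<rho> * 10 ^ ?D * (r * s i) ^ ?D)"
    by (simp only: mult.assoc)
  then have "min 1 (\<rho> * (2 * r) ^ ?D * (\<Prod>i\<in>UNIV. 3 * s i + 2 / r))
      \<le> min 1 (real ?D * (\<rho> * 10 ^ ?D) + (\<Sum>i\<in>UNIV. \<rho> * 10 ^ ?D * (r * s i) ^ ?D))"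
    by simp
  also have "\<dots> \<le> real ?D * (\<rho> * 10 ^ ?D) + (\<Sum>i\<in>UNIV. min 1 (\<rho> * 10 ^ ?D * (r * s i) ^ ?D))"
    using assms by (intro min_one_add_sum_le) auto
  finally show ?thesis .
qed

lemma kernel_avg_indicator_le_sum:
  fixes \<Lambda> :: "(int ^ 'd::finite) set"
  assumes "0 < r" and "0 \<le> \<rho>" and "grid_density_le r \<Lambda> \<rho>"
  shows "kernel_avg N (indicator \<Lambda>) x \<le> real CARD('d) * (\<rho> * 10 ^ CARD('d))
    + (\<Sum>i\<in>UNIV. min 1 (\<rho> * 10 ^ CARD('d) * real r ^ CARD('d) / sqrt (real (N i) + 1) ^ CARD('d)))"
proof -
  let ?s = "\<lambda>i. 1 / sqrt (real (N i) + 1)"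
  have "kernel_avg N (indicator \<Lambda>) x \<le> min 1 (\<rho> * (2 * real r) ^ CARD('d) * (\<Prod>i\<in>UNIV. 3 * ?s i + 2 / real r))"
    using kernel_avg_indicator_le[OF assms, of N x] kernel_avg_le_1[of "indicator \<Lambda>" N x, OF indicator_le_1]
    by (simp only: min.bounded_iff times_divide_eq_right mult_1_right)
  also have "\<dots> \<le> real CARD('d) * (\<rho> * 10 ^ CARD('d))
      + (\<Sum>i\<in>UNIV. min 1 (\<rho> * 10 ^ CARD('d) * (real r * ?s i) ^ CARD('d)))"
    using assms by (intro min_one_prod_le) auto
  also have "(\<Sum>i\<in>UNIV. min 1 (\<rho> * 10 ^ CARD('d) * (real r * ?s i) ^ CARD('d)))
      = (\<Sum>i\<in>UNIV. min 1 (\<rho> * 10 ^ CARD('d) * real r ^ CARD('d) / sqrt (real (N i) + 1) ^ CARD('d)))"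
    by (simp only: times_divide_eq_right mult_1_right power_divide mult.assoc)
  finally show ?thesis .
qed

lemma sum_counts_avg_add_sum_le:
  fixes h :: "nat \<Rightarrow> real"
  assumes "\<And>n. 0 \<le> h n"
  shows "(\<Sum>j<m. counts_avg j (\<lambda>N :: 'd::finite \<Rightarrow> nat. c + (\<Sum>i\<in>UNIV. h (N i))))
    \<le> real m * c + real CARD('d) * (real CARD('d) * (\<Sum>n<m. h n))"
proof -
  have "(\<Sum>j<m. counts_avg j (\<lambda>N :: 'd \<Rightarrow> nat. c + (\<Sum>i\<in>UNIV. h (N i))))
      = (\<Sum>j<m. c + (\<Sum>i\<in>(UNIV :: 'd set). counts_avg j (\<lambda>N. h (N i))))"
    by (simp add: counts_avg_add counts_avg_const counts_avg_sum)
  also have "\<dots> = real m * c + (\<Sum>i\<in>(UNIV :: 'd set). \<Sum>j<m. counts_avg j (\<lambda>N. h (N i)))"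
    by (simp only: sum.distrib, subst sum.swap, simp)
  also have "\<dots> \<le> real m * c + (\<Sum>i\<in>(UNIV :: 'd set). real CARD('d) * (\<Sum>n<m. h n))"
    by (intro add_left_mono sum_mono sum_counts_avg_coord_le assms)
  finally show ?thesis
    by simp
qed

definition expected_visits :: "(int ^ 'd::finite) set \<Rightarrow> nat \<Rightarrow> int ^ 'd \<Rightarrow> real" where
  "expected_visits \<Lambda> m x = (\<Sum>j<m. (srw_op ^^ j) (indicator \<Lambda>) x)"

definition visits_const :: "nat \<Rightarrow> real" where
  "visits_const D = real D * 10 ^ D + 400 * real D ^ 2"

lemma mult_power_powr:
  fixes a c :: real
  assumes "0 \<le> c" and "0 < a" and "0 < D"
  shows "(c * a ^ D) powr (2 / real D) = c powr (2 / real D) * a ^ 2"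
proof -
  have "(a ^ D) powr (2 / real D) = (a powr real D) powr (2 / real D)"
    using assms by (simp add: powr_realpow)
  also have "\<dots> = a powr (real D * (2 / real D))"
    by (rule powr_powr)
  also have "\<dots> = a ^ 2"
    using assms by (simp add: powr_numeral)
  finally have "(a ^ D) powr (2 / real D) = a ^ 2" .
  then show ?thesis
    using assms by (simp add: powr_mult)
qed

lemma expected_visits_le:
  fixes \<Lambda> :: "(int ^ 'd::finite) set"
  assumes "0 < r" and "0 < \<rho>" and "3 \<le> CARD('d)" and "grid_density_le r \<Lambda> \<rho>"
  shows "expected_visits \<Lambda> m x
    \<le> visits_const CARD('d) * (\<rho> * real m + \<rho> powr (2 / real CARD('d)) * real r ^ 2)"
proof -
  define D where "D = CARD('d)"
  define A where "A = \<rho> * (10 * real r) ^ D"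
  define h where "h n = min 1 (A / sqrt (real n + 1) ^ D)" for n
  define c where "c = real D * (\<rho> * 10 ^ D)"
  have A: "0 < A"
    using assms by (simp add: A_def)
  have bound: "kernel_avg N (indicator \<Lambda>) x \<le> c + (\<Sum>i\<in>UNIV. h (N i))" for N :: "'d \<Rightarrow> nat"
    using kernel_avg_indicator_le_sum[OF assms(1) _ assms(4), of N x] assms(2)
    by (simp add: c_def h_def A_def D_def power_mult_distrib mult.assoc)
  have "expected_visits \<Lambda> m x = (\<Sum>j<m. counts_avg j (\<lambda>N. kernel_avg N (indicator \<Lambda>) x))"
    by (simp add: expected_visits_def srw_op_power)
  also have "\<dots> \<le> (\<Sum>j<m. counts_avg j (\<lambda>N. c + (\<Sum>i\<in>(UNIV :: 'd set). h (N i))))"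
    by (intro sum_mono counts_avg_mono bound)
  also have "\<dots> \<le> real m * c + real D * (real D * (\<Sum>n<m. h n))"
    unfolding D_def by (intro sum_counts_avg_add_sum_le) (simp add: h_def A less_imp_le)
  also have "\<dots> \<le> real m * c + real D * (real D * (4 * A powr (2 / real D)))"
    using sum_min_one_inverse_sqrt_power_le[OF A, of D m] assms unfolding h_def D_def
    by (intro add_left_mono mult_left_mono) simp_all
  also have "\<dots> = real D * 10 ^ D * (\<rho> * real m) + 400 * real D ^ 2 * (\<rho> powr (2 / real D) * real r ^ 2)"
  proof -
    have "A powr (2 / real D) = \<rho> powr (2 / real D) * (10 * real r) ^ 2"
      unfolding A_def using assms by (intro mult_power_powr) (simp_all add: D_def)
    then show ?thesis
      by (simp add: c_def power2_eq_square)
  qed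
  also have "\<dots> \<le> visits_const D * (\<rho> * real m + \<rho> powr (2 / real D) * real r ^ 2)"
  proof -
    have "0 \<le> real D * 10 ^ D * (\<rho> powr (2 / real D) * real r ^ 2)"
      and "0 \<le> 400 * real D ^ 2 * (\<rho> * real m)"
      using assms by simp_all
    then show ?thesis
      unfolding visits_const_def distrib_left distrib_right by linarith
  qed
  finally show ?thesis
    unfolding D_def .
qed

section \<open>Exponential moments of the number of visits\<close>

lemma srw_op_const: "srw_op (\<lambda>_. c) x = c"
  by (simp add: srw_op_def coord_avg_def)

lemma srw_op_mono: "(\<And>y. g y \<le> h y) \<Longrightarrow> srw_op g x \<le> srw_op h x"
  unfolding srw_op_def coord_avg_def by (intro divide_right_mono sum_mono) (auto intro: add_mono)

lemma srw_op_add: "srw_op (\<lambda>y. g y + h y) x = srw_op g x + srw_op h x"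
  by (simp add: srw_op_def coord_avg_def sum.distrib add_divide_distrib algebra_simps)

lemma srw_op_cmult: "srw_op (\<lambda>y. c * g y) x = c * srw_op g x"
  by (simp add: srw_op_def coord_avg_def sum_distrib_left algebra_simps)

lemma srw_op_sum: "finite S \<Longrightarrow> srw_op (\<lambda>y. \<Sum>j\<in>S. g j y) x = (\<Sum>j\<in>S. srw_op (g j) x)"
  by (induction S rule: finite_induct) (simp_all add: srw_op_const srw_op_add)

lemma srw_op_power_nonneg: "(\<And>y. 0 \<le> g y) \<Longrightarrow> 0 \<le> (srw_op ^^ j) g x"
proof (induction j arbitrary: x)
  case (Suc j)
  then show ?case
    using srw_op_mono[of "\<lambda>_. 0" "(srw_op ^^ j) g" x] by (simp add: srw_op_const)
qed simp

lemma expected_visits_mono: "m \<le> m' \<Longrightarrow> expected_visits \<Lambda> m x \<le> expected_visits \<Lambda> m' x"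
  unfolding expected_visits_def by (intro sum_mono2 srw_op_power_nonneg) auto

lemma expected_visits_Suc:
  "expected_visits \<Lambda> (Suc m) x = indicator \<Lambda> x + srw_op (expected_visits \<Lambda> m) x"
  unfolding expected_visits_def sum.lessThan_Suc_shift
  by (simp add: srw_op_sum[symmetric] expected_visits_def)

text \<open>\<open>feynman_kac \<theta> \<Lambda> m x\<close> is the exponential moment \<open>E\<^sub>x exp (\<theta> #{k < m. S\<^sub>k \<in> \<Lambda>})\<close>,
  see \<open>expectation_exp_visits\<close> below.\<close>

definition tilted_op :: "real \<Rightarrow> (int ^ 'd::finite) set \<Rightarrow> (int ^ 'd \<Rightarrow> real) \<Rightarrow> int ^ 'd \<Rightarrow> real" where
  "tilted_op \<theta> \<Lambda> g x = exp (\<theta> * indicator \<Lambda> x) * srw_op g x"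

definition feynman_kac :: "real \<Rightarrow> (int ^ 'd::finite) set \<Rightarrow> nat \<Rightarrow> int ^ 'd \<Rightarrow> real" where
  "feynman_kac \<theta> \<Lambda> m = (tilted_op \<theta> \<Lambda> ^^ m) (\<lambda>_. 1)"

lemma tilted_op_power_mono:
  "(\<And>y. g y \<le> h y) \<Longrightarrow> (tilted_op \<theta> \<Lambda> ^^ a) g x \<le> (tilted_op \<theta> \<Lambda> ^^ a) h x"
proof (induction a arbitrary: x)
  case (Suc a)
  then show ?case
    by (simp add: tilted_op_def mult_left_mono srw_op_mono)
qed simp

lemma tilted_op_power_cmult: "(tilted_op \<theta> \<Lambda> ^^ a) (\<lambda>y. c * g y) x = c * (tilted_op \<theta> \<Lambda> ^^ a) g x"
proof (induction a arbitrary: x)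
  case (Suc a)
  have "(tilted_op \<theta> \<Lambda> ^^ a) (\<lambda>y. c * g y) = (\<lambda>y. c * (tilted_op \<theta> \<Lambda> ^^ a) g y)"
    using Suc.IH by blast
  then have "(tilted_op \<theta> \<Lambda> ^^ Suc a) (\<lambda>y. c * g y) x
      = tilted_op \<theta> \<Lambda> (\<lambda>y. c * (tilted_op \<theta> \<Lambda> ^^ a) g y) x"
    by simp
  also have "\<dots> = c * (tilted_op \<theta> \<Lambda> ^^ Suc a) g x"
    unfolding tilted_op_def by (simp only: srw_op_cmult) simp
  finally show ?case .
qed simp

lemma feynman_kac_Suc:
  "feynman_kac \<theta> \<Lambda> (Suc m) x = (1 + (exp \<theta> - 1) * indicator \<Lambda> x) * srw_op (feynman_kac \<theta> \<Lambda> m) x"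
  by (simp add: feynman_kac_def tilted_op_def indicator_def)

lemma feynman_kac_add_le:
  assumes "\<And>y. feynman_kac \<theta> \<Lambda> b y \<le> B"
  shows "feynman_kac \<theta> \<Lambda> (a + b) x \<le> B * feynman_kac \<theta> \<Lambda> a x"
proof -
  have "feynman_kac \<theta> \<Lambda> (a + b) x = (tilted_op \<theta> \<Lambda> ^^ a) (feynman_kac \<theta> \<Lambda> b) x"
    by (simp add: feynman_kac_def funpow_add)
  also have "\<dots> \<le> (tilted_op \<theta> \<Lambda> ^^ a) (\<lambda>y. B * 1) x"
    using assms by (intro tilted_op_power_mono) simp
  also have "\<dots> = B * feynman_kac \<theta> \<Lambda> a x"
    unfolding feynman_kac_def by (rule tilted_op_power_cmult)
  finally show ?thesis .
qed

lemma feynman_kac_le_one_plus_visits: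
  assumes "0 \<le> \<theta>" and "0 \<le> B" and "\<And>y. expected_visits \<Lambda> m y \<le> A"
    and B: "1 + B * (exp \<theta> - 1) * A \<le> B"
  shows "feynman_kac \<theta> \<Lambda> m x \<le> 1 + B * (exp \<theta> - 1) * expected_visits \<Lambda> m x"
  using assms(3)
proof (induction m arbitrary: x)
  case (Suc m)
  define c where "c = exp \<theta> - 1"
  have c: "0 \<le> c"
    using assms(1) by (simp add: c_def)
  have "expected_visits \<Lambda> m y \<le> A" for y
    using Suc.prems[of y] expected_visits_mono[of m "Suc m" \<Lambda> y] by simp
  then have IH: "feynman_kac \<theta> \<Lambda> m y \<le> 1 + B * c * expected_visits \<Lambda> m y"
    and "B * c * expected_visits \<Lambda> m y \<le> B * c * A" for y
    using Suc.IH assms(2) c by (auto simp: c_def intro: mult_left_mono)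
  with B have "feynman_kac \<theta> \<Lambda> m y \<le> B" for y
    unfolding c_def by (smt (verit) mult.assoc)
  then have "srw_op (feynman_kac \<theta> \<Lambda> m) x \<le> srw_op (\<lambda>_. B) x"
    by (rule srw_op_mono)
  then have "c * indicator \<Lambda> x * srw_op (feynman_kac \<theta> \<Lambda> m) x \<le> c * indicator \<Lambda> x * B"
    using c by (intro mult_left_mono) (simp_all add: srw_op_const)
  moreover have "srw_op (feynman_kac \<theta> \<Lambda> m) x \<le> 1 + B * c * srw_op (expected_visits \<Lambda> m) x"
    using srw_op_mono[OF IH] by (simp add: srw_op_add srw_op_const srw_op_cmult)
  ultimately show ?case
    by (simp add: feynman_kac_Suc expected_visits_Suc c_def[symmetric] algebra_simps)
qed (simp add: feynman_kac_def expected_visits_def)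

lemma feynman_kac_le_khasminskii:
  assumes "0 \<le> \<theta>" and visits: "\<And>x. expected_visits \<Lambda> M x \<le> A" and small: "(exp \<theta> - 1) * A < 1"
  shows "feynman_kac \<theta> \<Lambda> M x \<le> 1 / (1 - (exp \<theta> - 1) * A)"
proof -
  define B where "B = 1 / (1 - (exp \<theta> - 1) * A)"
  have "0 < B" and BB: "1 + B * (exp \<theta> - 1) * A = B"
    using small by (simp_all add: B_def field_simps)
  have "feynman_kac \<theta> \<Lambda> M x \<le> 1 + B * (exp \<theta> - 1) * expected_visits \<Lambda> M x"
    using assms(1) \<open>0 < B\<close> visits BB by (intro feynman_kac_le_one_plus_visits) auto
  also have "\<dots> \<le> 1 + B * (exp \<theta> - 1) * A"
    using visits[of x] \<open>0 < B\<close> assms(1) by (intro add_left_mono mult_left_mono) auto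
  finally have "feynman_kac \<theta> \<Lambda> M x \<le> B"
    unfolding BB .
  then show ?thesis
    unfolding B_def .
qed

lemma inverse_one_minus_le_exp:
  fixes y :: real
  assumes "0 \<le> y" and "y \<le> 1 / 2"
  shows "1 / (1 - y) \<le> exp (2 * y)"
proof -
  have "1 \<le> (1 - y) * (1 + 2 * y)"
    using mult_nonneg_nonneg[of y "1 - 2 * y"] assms by (simp add: algebra_simps)
  also have "\<dots> \<le> (1 - y) * exp (2 * y)"
    using assms by (intro mult_left_mono exp_ge_add_one_self_aux) simp_all
  finally show ?thesis
    using assms by (simp add: field_simps)
qed

lemma feynman_kac_le_exp_blocks:
  assumes "0 \<le> \<theta>" and "0 \<le> a" and "0 \<le> b" and "1 \<le> m\<^sub>0"
    and visits: "\<And>m x. expected_visits \<Lambda> m x \<le> a * real m + b"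
    and small: "(exp \<theta> - 1) * (a * real m\<^sub>0 + b) \<le> 1 / 2"
  shows "feynman_kac \<theta> \<Lambda> N x \<le> exp (2 * (exp \<theta> - 1) * (a * real N + (real (N div m\<^sub>0) + 1) * b))"
proof -
  define c where "c = exp \<theta> - 1"
  have c: "0 \<le> c"
    using assms(1) by (simp add: c_def)
  have block: "feynman_kac \<theta> \<Lambda> m y \<le> exp (2 * c * (a * real m + b))" if "m \<le> m\<^sub>0" for m y
  proof -
    have "c * (a * real m + b) \<le> c * (a * real m\<^sub>0 + b)"
      using that assms c by (intro mult_left_mono add_right_mono) auto
    then have small_m: "c * (a * real m + b) \<le> 1 / 2"
      using small by (simp add: c_def)
    have "feynman_kac \<theta> \<Lambda> m y \<le> 1 / (1 - c * (a * real m + b))"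
      unfolding c_def using small_m by (intro feynman_kac_le_khasminskii assms(1) visits) (simp add: c_def)
    also have "\<dots> \<le> exp (2 * c * (a * real m + b))"
      using small_m c assms by (simp add: inverse_one_minus_le_exp mult.assoc)
    finally show ?thesis .
  qed
  have "feynman_kac \<theta> \<Lambda> (q * m\<^sub>0 + s) y \<le> exp (2 * c * (a * real (q * m\<^sub>0 + s) + (real q + 1) * b))"
    if "s < m\<^sub>0" for q s y
  proof (induction q arbitrary: y)
    case 0
    then show ?case
      using block[of s] that by simp
  next
    case (Suc q)
    have "feynman_kac \<theta> \<Lambda> (Suc q * m\<^sub>0 + s) y = feynman_kac \<theta> \<Lambda> (m\<^sub>0 + (q * m\<^sub>0 + s)) y"
      by (simp add: algebra_simps)
    also have "\<dots> \<le> exp (2 * c * (a * real (q * m\<^sub>0 + s) + (real q + 1) * b)) * feynman_kac \<theta> \<Lambda> m\<^sub>0 y"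
      by (intro feynman_kac_add_le Suc.IH)
    also have "\<dots> \<le> exp (2 * c * (a * real (q * m\<^sub>0 + s) + (real q + 1) * b)) * exp (2 * c * (a * real m\<^sub>0 + b))"
      by (intro mult_left_mono block) simp_all
    also have "\<dots> = exp (2 * c * (a * real (Suc q * m\<^sub>0 + s) + (real (Suc q) + 1) * b))"
      by (simp add: exp_add[symmetric] algebra_simps)
    finally show ?case .
  qed
  from this[of "N mod m\<^sub>0" "N div m\<^sub>0" x] assms(4) show ?thesis
    by (simp add: c_def)
qed

lemma nat_floor_bounds:
  fixes y :: real
  assumes "1 \<le> y"
  shows "y / 2 \<le> real (nat \<lfloor>y\<rfloor>)" and "real (nat \<lfloor>y\<rfloor>) \<le> y" and "1 \<le> nat \<lfloor>y\<rfloor>"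
proof -
  have "y - 1 < real_of_int \<lfloor>y\<rfloor>" "real_of_int \<lfloor>y\<rfloor> \<le> y" "1 \<le> \<lfloor>y\<rfloor>"
    using assms by linarith+
  moreover have "real (nat \<lfloor>y\<rfloor>) = real_of_int \<lfloor>y\<rfloor>"
    using \<open>1 \<le> \<lfloor>y\<rfloor>\<close> by simp
  ultimately show "y / 2 \<le> real (nat \<lfloor>y\<rfloor>)" "real (nat \<lfloor>y\<rfloor>) \<le> y" "1 \<le> nat \<lfloor>y\<rfloor>"
    by linarith+
qed

lemma exp_minus_one_le_two_mult:
  fixes \<theta> :: real
  assumes "0 \<le> \<theta>" and "\<theta> \<le> 1"
  shows "exp \<theta> - 1 \<le> 2 * \<theta>"
proof -
  have "\<theta>\<^sup>2 \<le> \<theta>"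
    using mult_left_mono[of \<theta> 1 \<theta>] assms by (simp add: power2_eq_square)
  then show ?thesis
    using exp_bound[OF assms] by simp
qed

lemma real_div_le_of_half_le:
  assumes "0 < Y" and "Y / 2 \<le> real m"
  shows "real (N div m) \<le> 2 * real N / Y"
proof -
  have "real (N div m) * real m \<le> real N"
    by (metis div_times_less_eq_dividend of_nat_le_iff of_nat_mult)
  moreover have "real (N div m) * (Y / 2) \<le> real (N div m) * real m"
    using assms by (intro mult_left_mono) auto
  ultimately show ?thesis
    using assms by (simp add: field_simps)
qed

lemma feynman_kac_le_exp_linear:
  assumes "0 < \<theta>" and "\<theta> \<le> 1" and "0 < a" and "0 \<le> b"
    and visits: "\<And>m x. expected_visits \<Lambda> m x \<le> a * real m + b"
    and "8 * \<theta> * a \<le> 1" and "8 * \<theta> * b \<le> 1"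
  shows "feynman_kac \<theta> \<Lambda> N x \<le> exp (\<theta> * (12 * a * real N + 4 * b))"
proof -
  define c where "c = exp \<theta> - 1"
  define Y where "Y = 1 / (8 * \<theta> * a)"
  define m\<^sub>0 where "m\<^sub>0 = nat \<lfloor>Y\<rfloor>"
  define q where "q = N div m\<^sub>0"
  have c: "0 \<le> c" "c \<le> 2 * \<theta>"
    using assms(1,2) exp_minus_one_le_two_mult[of \<theta>] by (simp_all add: c_def)
  have Y: "1 \<le> Y" "2 * \<theta> * a * Y = 1 / 4"
    using assms by (simp_all add: Y_def field_simps)
  have m\<^sub>0: "Y / 2 \<le> real m\<^sub>0" "real m\<^sub>0 \<le> Y" "1 \<le> m\<^sub>0"
    unfolding m\<^sub>0_def using nat_floor_bounds[OF Y(1)] by auto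
  have "c * (a * real m\<^sub>0 + b) \<le> 2 * \<theta> * (a * real m\<^sub>0 + b)"
    using c(2) assms by (intro mult_right_mono) auto
  also have "\<dots> \<le> 2 * \<theta> * (a * Y + b)"
    using m\<^sub>0(2) assms by (intro mult_left_mono add_right_mono) auto
  also have "\<dots> = 1 / 4 + 2 * \<theta> * b"
    using Y(2) by (simp add: algebra_simps)
  finally have small: "(exp \<theta> - 1) * (a * real m\<^sub>0 + b) \<le> 1 / 2"
    using assms(7) unfolding c_def by linarith
  have "real q \<le> 2 * real N / Y"
    unfolding q_def using Y(1) m\<^sub>0(1) by (intro real_div_le_of_half_le) auto
  also have "\<dots> = 16 * \<theta> * a * real N"
    using assms by (simp add: Y_def field_simps)
  finally have q: "real q \<le> 16 * \<theta> * a * real N" .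
  have "2 * c * (a * real N + (real q + 1) * b) \<le> 4 * \<theta> * (a * real N + (real q + 1) * b)"
    using c assms by (intro mult_right_mono) auto
  also have "\<dots> \<le> \<theta> * (12 * a * real N + 4 * b)"
  proof -
    have "4 * \<theta> * b * real q \<le> (1 / 2) * (16 * \<theta> * a * real N)"
      using q assms by (intro mult_mono) auto
    then show ?thesis
      by (simp add: algebra_simps)
  qed
  finally have "exp (2 * (exp \<theta> - 1) * (a * real N + (real (N div m\<^sub>0) + 1) * b))
      \<le> exp (\<theta> * (12 * a * real N + 4 * b))"
    unfolding c_def q_def by simp
  with feynman_kac_le_exp_blocks[OF less_imp_le[OF assms(1)] less_imp_le[OF assms(3)] assms(4) m\<^sub>0(3) visits small]
  show ?thesis
    by (rule order_trans)
qed

section \<open>The random walk and the tail bound\<close>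

lemma srw_steps_eq: "(srw_steps :: (int ^ 'd::finite) set) = range (\<lambda>i. axis i 1) \<union> range (\<lambda>i. - axis i 1)"
proof -
  have "axis i (-1) = - axis i (1 :: int)" for i :: 'd
    by (simp add: vec_eq_iff axis_def)
  then show ?thesis
    unfolding srw_steps_def by auto
qed

lemma finite_srw_steps: "finite srw_steps"
  by (simp add: srw_steps_eq)

lemma srw_steps_nonempty: "srw_steps \<noteq> {}"
  by (simp add: srw_steps_eq)

lemma sum_srw_steps:
  "(\<Sum>e\<in>srw_steps. h e) = (\<Sum>i\<in>UNIV. h (axis i 1)) + (\<Sum>i\<in>UNIV. h (- axis i (1 :: int) :: int ^ 'd::finite))"
proof -
  have inj: "inj (\<lambda>i::'d. axis i (1 :: int))" "inj (\<lambda>i::'d. - axis i (1 :: int))"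
    by (auto simp: inj_on_def axis_eq_axis)
  have "range (\<lambda>i::'d. axis i (1 :: int)) \<inter> range (\<lambda>i. - axis i 1) = {}"
    by (auto simp: vec_eq_iff axis_nth_eq split: if_splits)
  then have "(\<Sum>e\<in>srw_steps. h e) = (\<Sum>e\<in>range (\<lambda>i::'d. axis i 1). h e) + (\<Sum>e\<in>range (\<lambda>i::'d. - axis i 1). h e)"
    unfolding srw_steps_eq by (intro sum.union_disjoint) auto
  then show ?thesis
    by (simp add: sum.reindex[OF inj(1)] sum.reindex[OF inj(2)])
qed

lemma card_srw_steps: "card (srw_steps :: (int ^ 'd::finite) set) = 2 * CARD('d)"
proof -
  have "card (srw_steps :: (int ^ 'd) set) = (\<Sum>e\<in>(srw_steps :: (int ^ 'd) set). (1 :: nat))"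
    by simp
  also have "\<dots> = CARD('d) + CARD('d)"
    by (simp only: sum_srw_steps) simp
  finally show ?thesis
    by simp
qed

lemma expectation_srw_step:
  "measure_pmf.expectation (pmf_of_set srw_steps) (\<lambda>e. g (z + e)) = srw_op g (z :: int ^ 'd::finite)"
proof -
  have "measure_pmf.expectation (pmf_of_set srw_steps) (\<lambda>e. g (z + e))
      = (\<Sum>e\<in>srw_steps. g (z + e)) / real (card (srw_steps :: (int ^ 'd) set))"
    by (rule integral_pmf_of_set[OF srw_steps_nonempty finite_srw_steps])
  also have "\<dots> = srw_op g z"
    by (simp add: sum_srw_steps card_srw_steps srw_op_def coord_avg_def sum.distrib
        sum_divide_distrib[symmetric] field_simps)
  finally show ?thesis .
qed

lemma finite_set_srw_increments: "finite (set_pmf (srw_increments n :: (nat \<Rightarrow> int ^ 'd::finite) pmf))"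
proof -
  have "set_pmf (srw_increments n :: (nat \<Rightarrow> int ^ 'd) pmf)
      \<subseteq> PiE_dflt {..<n} 0 (set_pmf \<circ> (\<lambda>_. pmf_of_set srw_steps))"
    unfolding srw_increments_def by (rule set_Pi_pmf_subset') simp
  moreover have "finite (PiE_dflt {..<n} (0 :: int ^ 'd) (set_pmf \<circ> (\<lambda>_. pmf_of_set srw_steps)))"
    by (rule finite_PiE_dflt) (simp_all add: finite_srw_steps srw_steps_nonempty)
  ultimately show ?thesis
    by (rule finite_subset)
qed

lemma srw_increments_Suc:
  "srw_increments (Suc n) = map_pmf (\<lambda>(y, f). f(n := y)) (pair_pmf (pmf_of_set srw_steps) (srw_increments n))"
  unfolding srw_increments_def lessThan_Suc by (rule Pi_pmf_insert) simp_all

lemma expectation_pair_pmf_finite: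
  fixes \<phi> :: "'a \<times> 'b \<Rightarrow> real"
  assumes A: "finite (set_pmf A)" and B: "finite (set_pmf B)"
  shows "measure_pmf.expectation (pair_pmf A B) \<phi>
    = measure_pmf.expectation B (\<lambda>b. measure_pmf.expectation A (\<lambda>a. \<phi> (a, b)))"
proof -
  have "measure_pmf.expectation (pair_pmf A B) \<phi> = (\<Sum>(a, b)\<in>set_pmf A \<times> set_pmf B. \<phi> (a, b) * (pmf A a * pmf B b))"
    using A B by (subst integral_measure_pmf_real[of "set_pmf A \<times> set_pmf B"]) (auto simp: pmf_pair intro!: sum.cong)
  also have "\<dots> = (\<Sum>b\<in>set_pmf B. (\<Sum>a\<in>set_pmf A. \<phi> (a, b) * pmf A a) * pmf B b)"
    by (simp add: sum.cartesian_product[symmetric] sum.swap[of _ "set_pmf A"] sum_distrib_right mult.assoc)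
  also have "\<dots> = measure_pmf.expectation B (\<lambda>b. measure_pmf.expectation A (\<lambda>a. \<phi> (a, b)))"
    using A B by (simp add: integral_measure_pmf_real[of "set_pmf A"] integral_measure_pmf_real[of "set_pmf B"])
  finally show ?thesis .
qed

lemma srw_pos_fun_upd: "k \<le> n \<Longrightarrow> srw_pos (f(n := y)) k = srw_pos f k"
  unfolding srw_pos_def by (rule sum.cong) auto

lemma srw_pos_fun_upd_Suc: "srw_pos (f(n := y)) (Suc n) = srw_pos f n + y"
  using srw_pos_fun_upd[of n n f y] by (simp add: srw_pos_def)

lemma expectation_srw_increments_Suc:
  fixes F :: "(nat \<Rightarrow> int ^ 'd::finite) \<Rightarrow> real"
  shows "measure_pmf.expectation (srw_increments (Suc n)) F
    = measure_pmf.expectation (srw_increments n)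
        (\<lambda>f. measure_pmf.expectation (pmf_of_set srw_steps) (\<lambda>y. F (f(n := y))))"
  unfolding srw_increments_Suc integral_map_pmf
  by (subst expectation_pair_pmf_finite) (simp_all add: finite_set_srw_increments finite_srw_steps srw_steps_nonempty)

lemma expectation_tilted_walk:
  "measure_pmf.expectation (srw_increments n)
     (\<lambda>X. exp (\<theta> * (\<Sum>k<n. indicator \<Lambda> (x + srw_pos X k))) * g (x + srw_pos X n))
   = (tilted_op \<theta> \<Lambda> ^^ n) g (x :: int ^ 'd::finite)"
proof (induction n arbitrary: g)
  case 0
  show ?case
    by (simp add: srw_increments_def srw_pos_def)
next
  case (Suc n)
  let ?E = "\<lambda>f. exp (\<theta> * (\<Sum>k<n. indicator \<Lambda> (x + srw_pos f k)))"
  have "measure_pmf.expectation (pmf_of_set srw_steps)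
      (\<lambda>y. exp (\<theta> * (\<Sum>k<Suc n. indicator \<Lambda> (x + srw_pos (f(n := y)) k))) * g (x + srw_pos (f(n := y)) (Suc n)))
    = ?E f * tilted_op \<theta> \<Lambda> g (x + srw_pos f n)" for f
  proof -
    have "(\<Sum>k<Suc n. indicator \<Lambda> (x + srw_pos (f(n := y)) k) :: real)
        = (\<Sum>k<Suc n. indicator \<Lambda> (x + srw_pos f k))" for y
      by (intro sum.cong) (auto simp: srw_pos_fun_upd)
    then show ?thesis
      using expectation_srw_step[of g "x + srw_pos f n"]
      by (simp add: srw_pos_fun_upd_Suc add.assoc tilted_op_def distrib_left exp_add)
  qed
  then show ?case
    by (simp add: expectation_srw_increments_Suc Suc.IH funpow_Suc_right del: funpow.simps)
qed

lemma expectation_exp_visits: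
  "measure_pmf.expectation (srw_increments n) (\<lambda>X. exp (\<theta> * (\<Sum>k\<le>n. indicator \<Lambda> (srw_pos X k))))
   = feynman_kac \<theta> \<Lambda> (Suc n) (0 :: int ^ 'd::finite)"
proof -
  have "(\<lambda>y. exp (\<theta> * indicator \<Lambda> y)) = tilted_op \<theta> \<Lambda> (\<lambda>_. 1)"
    by (simp add: tilted_op_def srw_op_const fun_eq_iff)
  then show ?thesis
    using expectation_tilted_walk[where x = 0 and n = n and g = "\<lambda>y. exp (\<theta> * indicator \<Lambda> y)"]
    by (simp add: lessThan_Suc_atMost[symmetric] distrib_left exp_add feynman_kac_def funpow_Suc_right
        del: funpow.simps)
qed

lemma card_range_inter_le_visits:
  "real (card (srw_range X n \<inter> \<Lambda>)) \<le> (\<Sum>k\<le>n. indicator \<Lambda> (srw_pos X k))"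
proof -
  have "srw_range X n \<inter> \<Lambda> = srw_pos X ` {k\<in>{..n}. srw_pos X k \<in> \<Lambda>}"
    by (auto simp: srw_range_def)
  then have "card (srw_range X n \<inter> \<Lambda>) \<le> card {k\<in>{..n}. srw_pos X k \<in> \<Lambda>}"
    by (simp add: card_image_le)
  also have "real \<dots> = (\<Sum>k\<le>n. indicator \<Lambda> (srw_pos X k))"
    by (simp add: indicator_def sum.If_cases Int_def)
  finally show ?thesis
    by simp
qed

lemma card_range_inter_le: "card (srw_range X n \<inter> \<Lambda>) \<le> Suc n"
proof -
  have "card (srw_range X n \<inter> \<Lambda>) \<le> card (srw_range X n)"
    by (intro card_mono) (simp_all add: srw_range_def)
  also have "\<dots> \<le> Suc n"
    using card_image_le[of "{..n}" "srw_pos X"] by (simp add: srw_range_def)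
  finally show ?thesis .
qed

lemma prob_card_range_inter_ge_le_feynman_kac:
  assumes "0 \<le> \<theta>"
  shows "measure_pmf.prob (srw_increments n) {X. t \<le> real (card (srw_range X n \<inter> \<Lambda>))}
    \<le> exp (- \<theta> * t) * feynman_kac \<theta> \<Lambda> (Suc n) (0 :: int ^ 'd::finite)"
proof -
  let ?S = "{X. t \<le> real (card (srw_range X n \<inter> \<Lambda>))}"
  let ?V = "\<lambda>X. \<Sum>k\<le>n. indicator \<Lambda> (srw_pos X k :: int ^ 'd) :: real"
  have ind_le: "indicator ?S X \<le> exp (- \<theta> * t) * exp (\<theta> * ?V X)" for X
  proof (cases "X \<in> ?S")
    case True
    then have "\<theta> * t \<le> \<theta> * ?V X"
      using card_range_inter_le_visits[of X n \<Lambda>] assms by (intro mult_left_mono) auto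
    then show ?thesis
      using True by (simp add: mult_exp_exp)
  qed simp
  have "measure_pmf.prob (srw_increments n) ?S = measure_pmf.expectation (srw_increments n) (indicator ?S)"
    by simp
  also have "\<dots> \<le> measure_pmf.expectation (srw_increments n) (\<lambda>X. exp (- \<theta> * t) * exp (\<theta> * ?V X))"
    by (intro integral_mono integrable_measure_pmf_finite finite_set_srw_increments ind_le)
  also have "\<dots> = exp (- \<theta> * t) * feynman_kac \<theta> \<Lambda> (Suc n) 0"
    by (simp add: expectation_exp_visits)
  finally show ?thesis .
qed

lemma prob_card_range_inter_ge_le_exp_half:
  assumes "0 < \<theta>" and "\<theta> \<le> 1" and "0 < a" and "0 \<le> b"
    and visits: "\<And>m x. expected_visits \<Lambda> m x \<le> a * real m + b"
    and "8 * \<theta> * a \<le> 1" and "8 * \<theta> * b \<le> 1"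
    and "1 \<le> n" and "b \<le> a * real n" and "56 * a * real n \<le> t"
  shows "measure_pmf.prob (srw_increments n) {X. t \<le> real (card (srw_range X n \<inter> \<Lambda>))}
    \<le> exp (- (\<theta> * t / 2))"
proof -
  have "measure_pmf.prob (srw_increments n) {X. t \<le> real (card (srw_range X n \<inter> \<Lambda>))}
      \<le> exp (- \<theta> * t) * feynman_kac \<theta> \<Lambda> (Suc n) 0"
    using assms(1) by (intro prob_card_range_inter_ge_le_feynman_kac) simp
  also have "\<dots> \<le> exp (- \<theta> * t) * exp (\<theta> * (12 * a * real (Suc n) + 4 * b))"
    using assms by (intro mult_left_mono feynman_kac_le_exp_linear) auto
  also have "\<dots> = exp (- (\<theta> * (t - 12 * a * real (Suc n) - 4 * b)))"
    by (simp add: mult_exp_exp algebra_simps)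
  also have "\<dots> \<le> exp (- (\<theta> * (t / 2)))"
  proof -
    have "12 * a * real (Suc n) \<le> 12 * a * (2 * real n)"
      using assms by (intro mult_left_mono) auto
    then have "t / 2 \<le> t - 12 * a * real (Suc n) - 4 * b"
      using assms(9,10) by linarith
    then show ?thesis
      using assms(1) by (simp add: mult_left_mono)
  qed
  finally show ?thesis
    by simp
qed

lemma prob_card_range_inter_ge_eq_0:
  assumes "real (Suc n) < t"
  shows "measure_pmf.prob (srw_increments n) {X. t \<le> real (card (srw_range X n \<inter> \<Lambda>))} = 0"
proof -
  have "real (card (srw_range X n \<inter> \<Lambda>)) < t" for X
    using card_range_inter_le[of X n \<Lambda>] assms by (meson of_nat_le_iff order.strict_trans1)
  then have "{X. t \<le> real (card (srw_range X n \<inter> \<Lambda>))} = {}"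
    by (auto simp: not_le[symmetric])
  then show ?thesis
    by simp
qed

lemma visits_const_ge_1:
  assumes "1 \<le> D"
  shows "1 \<le> visits_const D"
proof -
  have "1 * 1 \<le> real D * 10 ^ D"
    using assms by (intro mult_mono) (simp_all add: one_le_power)
  moreover have "0 \<le> 400 * real D ^ 2"
    by simp
  ultimately show ?thesis
    unfolding visits_const_def by linarith
qed

lemma tilt_parameter:
  fixes \<rho> :: real
  assumes "2 \<le> D" and "0 < \<rho>" and "\<rho> \<le> 1" and "0 < r"
  defines "\<theta> \<equiv> \<rho> powr (1 - 2 / real D) / real r ^ 2"
  shows "0 < \<theta>" and "\<theta> \<le> 1" and "\<theta> * (\<rho> powr (2 / real D) * real r ^ 2) = \<rho>"
proof -
  have "\<rho> powr (1 - 2 / real D) \<le> 1"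
    using assms by (intro powr_le1) auto
  moreover have "1 \<le> real r ^ 2"
    using \<open>0 < r\<close> by (simp add: one_le_power)
  ultimately have "\<rho> powr (1 - 2 / real D) \<le> real r ^ 2"
    by linarith
  then show "0 < \<theta>" and "\<theta> \<le> 1"
    using \<open>0 < \<rho>\<close> \<open>0 < r\<close> by (simp_all add: \<theta>_def divide_le_eq)
  have "\<theta> * (\<rho> powr (2 / real D) * real r ^ 2) = \<rho> powr (1 - 2 / real D) * \<rho> powr (2 / real D)"
    using \<open>0 < r\<close> by (simp add: \<theta>_def field_simps)
  also have "\<dots> = \<rho>"
    using \<open>0 < \<rho>\<close> by (simp add: powr_add[symmetric])
  finally show "\<theta> * (\<rho> powr (2 / real D) * real r ^ 2) = \<rho>" .
qed

lemma prob_card_range_inter_ge_le_sparse: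
  fixes \<Lambda> :: "(int ^ 'd::finite) set"
  defines "D \<equiv> CARD('d)"
  defines "C \<equiv> visits_const D"
  assumes "3 \<le> D" and "0 < \<rho>" and small: "8 * C * \<rho> \<le> 1" and "0 < r"
    and "grid_density_le r \<Lambda> \<rho>"
    and n: "\<rho> powr (2 / real D - 1) * real r ^ 2 \<le> real n" and "56 * (C * \<rho>) * real n \<le> t"
  shows "measure_pmf.prob (srw_increments n) {X. t \<le> real (card (srw_range X n \<inter> \<Lambda>))}
    \<le> exp (- (\<rho> powr (1 - 2 / real D) * t / (2 * real r ^ 2)))"
proof -
  define \<theta> where "\<theta> = \<rho> powr (1 - 2 / real D) / real r ^ 2"
  define b where "b = C * \<rho> powr (2 / real D) * real r ^ 2"
  have C: "1 \<le> C"
    using assms(3) by (simp add: C_def visits_const_ge_1)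
  have "\<rho> \<le> C * \<rho>"
    using mult_right_mono[OF C, of \<rho>] \<open>0 < \<rho>\<close> by simp
  then have "\<rho> \<le> 1"
    using small by linarith
  then have \<theta>: "0 < \<theta>" "\<theta> \<le> 1" and \<theta>r: "\<theta> * (\<rho> powr (2 / real D) * real r ^ 2) = \<rho>"
    using tilt_parameter[of D \<rho> r] assms(3,4,6) by (simp_all add: \<theta>_def)
  have "\<theta> * b = C * (\<theta> * (\<rho> powr (2 / real D) * real r ^ 2))"
    by (simp add: b_def ac_simps)
  then have \<theta>b: "\<theta> * b = C * \<rho>"
    by (simp only: \<theta>r)
  have "\<theta> * (C * \<rho>) \<le> C * \<rho>"
    using \<theta> C \<open>0 < \<rho>\<close> by (intro mult_left_le_one_le) auto
  have "0 < \<rho> powr (2 / real D - 1) * real r ^ 2"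
    using \<open>0 < r\<close> \<open>0 < \<rho>\<close> by simp
  then have "1 \<le> n"
    using n by simp
  have "b = C * (\<rho> * \<rho> powr (2 / real D - 1)) * real r ^ 2"
    using \<open>0 < \<rho>\<close> by (simp add: b_def powr_mult_base)
  also have "\<dots> \<le> C * \<rho> * real n"
    using C \<open>0 < \<rho>\<close> mult_left_mono[OF n, of "C * \<rho>"] by (simp add: mult.assoc)
  finally have "b \<le> C * \<rho> * real n" .
  have "expected_visits \<Lambda> m x \<le> C * \<rho> * real m + b" for m x
    using expected_visits_le[of r \<rho> \<Lambda> m x] assms by (simp add: C_def D_def b_def algebra_simps)
  moreover have "8 * \<theta> * (C * \<rho>) \<le> 1" and "8 * \<theta> * b \<le> 1"
    using \<theta>b \<open>\<theta> * (C * \<rho>) \<le> C * \<rho>\<close> small by linarith+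
  moreover have "0 \<le> b"
    using C by (simp add: b_def)
  ultimately have "measure_pmf.prob (srw_increments n) {X. t \<le> real (card (srw_range X n \<inter> \<Lambda>))}
      \<le> exp (- (\<theta> * t / 2))"
    using \<theta> C \<open>0 < \<rho>\<close> \<open>1 \<le> n\<close> \<open>b \<le> C * \<rho> * real n\<close> assms(9)
    by (intro prob_card_range_inter_ge_le_exp_half[where a = "C * \<rho>" and b = b]) auto
  then show ?thesis
    by (simp add: \<theta>_def mult.commute)
qed

lemma prob_card_range_inter_ge_eq_0_dense:
  assumes "1 < 8 * c" and "0 < real n" and "56 * c * real n \<le> t"
  shows "measure_pmf.prob (srw_increments n) {X. t \<le> real (card (srw_range X n \<inter> \<Lambda>))} = 0"
proof (rule prob_card_range_inter_ge_eq_0)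
  have "real (Suc n) \<le> 7 * real n"
    using assms(2) by simp
  also have "\<dots> < 7 * real n * (8 * c)"
    using assms(1,2) by simp
  also have "\<dots> \<le> t"
    using assms(3) by (simp add: algebra_simps)
  finally show "real (Suc n) < t" .
qed

theorem proposition1p3:
  assumes "CARD('d::finite) \<ge> 3"
  shows "\<exists>\<kappa>::real. \<kappa> > 1 \<and>
    (\<forall>(\<rho>::real) (r::nat) (\<Lambda>::(int ^ 'd) set) (n::nat) (t::real).
      0 < \<rho> \<and> \<rho> < 1 \<and> r \<ge> 1 \<and>
      (\<forall>x::int ^ 'd. (\<forall>i. (2 * int r) dvd x $ i) \<longrightarrow>
          real (card (\<Lambda> \<inter> box_Q x (int r))) \<le> \<rho> * real (card (box_Q x (int r)))) \<and>
      real n \<ge> \<rho> powr (2 / real CARD('d) - 1) * real r ^ 2 \<and>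
      t \<ge> \<kappa> * \<rho> * real n \<longrightarrow>
      measure_pmf.prob (srw_increments n) {X. real (card (srw_range X n \<inter> \<Lambda>)) \<ge> t}
        \<le> exp (- (\<rho> powr (1 - 2 / real CARD('d)) * t / (2 * real r ^ 2))))"
proof (intro exI[of _ "56 * visits_const CARD('d)"] conjI allI impI)
  let ?C = "visits_const CARD('d)"
  show "56 * ?C > 1"
    using visits_const_ge_1[of "CARD('d)"] by simp
  fix \<rho> :: real and r n t and \<Lambda> :: "(int ^ 'd) set"
  assume h: "0 < \<rho> \<and> \<rho> < 1 \<and> r \<ge> 1 \<and>
      (\<forall>x::int ^ 'd. (\<forall>i. (2 * int r) dvd x $ i) \<longrightarrow>
          real (card (\<Lambda> \<inter> box_Q x (int r))) \<le> \<rho> * real (card (box_Q x (int r)))) \<and>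
      real n \<ge> \<rho> powr (2 / real CARD('d) - 1) * real r ^ 2 \<and> t \<ge> 56 * ?C * \<rho> * real n"
  have "0 < \<rho> powr (2 / real CARD('d) - 1) * real r ^ 2"
    using h by simp
  then have "0 < real n"
    using h by linarith
  show "measure_pmf.prob (srw_increments n) {X. real (card (srw_range X n \<inter> \<Lambda>)) \<ge> t}
      \<le> exp (- (\<rho> powr (1 - 2 / real CARD('d)) * t / (2 * real r ^ 2)))"
  proof (cases "8 * (?C * \<rho>) \<le> 1")
    case True
    with h assms show ?thesis
      by (intro prob_card_range_inter_ge_le_sparse) (auto simp: grid_density_le_def mult.assoc)
  next
    case False
    with h \<open>0 < real n\<close> show ?thesis
      using prob_card_range_inter_ge_eq_0_dense[of "?C * \<rho>" n t \<Lambda>] by (simp add: mult.assoc)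
  qed
qed

end
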